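(* Every weakly purely infinite $C^*$-algebra is nowhere scattered.
   Context: For positive elements $a,b$ in a $C^*$-algebra $A$, write $a\precsim b$ (Cuntz subequivalence) if $a=\lim_n r_nbr_n^*$ for some sequence $(r_n)_n\subseteq A$, and $a\sim b$ if $a\precsim b$ and $b\precsim a$. For $a\in A_+$ and $n\in\mathbb{N}$, $a^{\oplus n}$ denotes the diagonal matrix $\mathrm{diag}(a,\ldots,a)\in M_n(A)$, and $M_n(A)$ is viewed inside $M_{n+1}(A)$ in the upper-left corner. $A$ is $n$-weakly purely infinite if $a^{\oplus n}\sim a^{\oplus(n+1)}$ in $M_{n+1}(A)$ for every $a\in A_+$; $A$ is weakly purely infinite if it is $n$-weakly purely infinite for some $n\geq 1$. A $C^*$-algebra is nowhere scattered if it has no nonzero ideal-quotient $I/J$ (with $J\subseteq I\subseteq A$ closed two-sided ideals) that is isomorphic to the compact operators on some Hilbert space. *)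

theory Defs
  imports Complex_Main
begin

record 'a cstar_data =
  cs_carrier :: "'a set"
  cs_zero :: 'a
  cs_add :: "'a \<Rightarrow> 'a \<Rightarrow> 'a"
  cs_scale :: "complex \<Rightarrow> 'a \<Rightarrow> 'a"
  cs_mult :: "'a \<Rightarrow> 'a \<Rightarrow> 'a"
  cs_star :: "'a \<Rightarrow> 'a"
  cs_norm :: "'a \<Rightarrow> real"

definition cs_sub :: "'a cstar_data \<Rightarrow> 'a \<Rightarrow> 'a \<Rightarrow> 'a" where
  "cs_sub A a b = cs_add A a (cs_scale A (-1) b)"

definition cs_lim :: "'a cstar_data \<Rightarrow> (nat \<Rightarrow> 'a) \<Rightarrow> 'a \<Rightarrow> bool" where
  "cs_lim A f a \<longleftrightarrow> (\<lambda>k. cs_norm A (cs_sub A (f k) a)) \<longlonglongrightarrow> 0"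

definition cstar_algebra :: "'a cstar_data \<Rightarrow> bool" where
  "cstar_algebra A \<longleftrightarrow>
    (let X = cs_carrier A; z = cs_zero A; p = cs_add A; s = cs_scale A;
         m = cs_mult A; st = cs_star A; nm = cs_norm A in
     z \<in> X \<and>
     (\<forall>a\<in>X. \<forall>b\<in>X. p a b \<in> X \<and> m a b \<in> X) \<and>
     (\<forall>c. \<forall>a\<in>X. s c a \<in> X) \<and>
     (\<forall>a\<in>X. st a \<in> X) \<and>
     \<comment> \<open>complex vector space\<close>
     (\<forall>a\<in>X. \<forall>b\<in>X. \<forall>c\<in>X. p (p a b) c = p a (p b c)) \<and>
     (\<forall>a\<in>X. \<forall>b\<in>X. p a b = p b a) \<and>
     (\<forall>a\<in>X. p z a = a) \<and>
     (\<forall>a\<in>X. p a (s (-1) a) = z) \<and>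
     (\<forall>c. \<forall>a\<in>X. \<forall>b\<in>X. s c (p a b) = p (s c a) (s c b)) \<and>
     (\<forall>c d. \<forall>a\<in>X. s (c + d) a = p (s c a) (s d a)) \<and>
     (\<forall>c d. \<forall>a\<in>X. s (c * d) a = s c (s d a)) \<and>
     (\<forall>a\<in>X. s 1 a = a) \<and>
     \<comment> \<open>associative algebra\<close>
     (\<forall>a\<in>X. \<forall>b\<in>X. \<forall>c\<in>X. m (m a b) c = m a (m b c)) \<and>
     (\<forall>a\<in>X. \<forall>b\<in>X. \<forall>c\<in>X. m a (p b c) = p (m a b) (m a c)) \<and>
     (\<forall>a\<in>X. \<forall>b\<in>X. \<forall>c\<in>X. m (p a b) c = p (m a c) (m b c)) \<and>
     (\<forall>c. \<forall>a\<in>X. \<forall>b\<in>X. s c (m a b) = m (s c a) b \<and> s c (m a b) = m a (s c b)) \<and>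
     \<comment> \<open>involution\<close>
     (\<forall>a\<in>X. st (st a) = a) \<and>
     (\<forall>a\<in>X. \<forall>b\<in>X. st (p a b) = p (st a) (st b)) \<and>
     (\<forall>c. \<forall>a\<in>X. st (s c a) = s (cnj c) (st a)) \<and>
     (\<forall>a\<in>X. \<forall>b\<in>X. st (m a b) = m (st b) (st a)) \<and>
     \<comment> \<open>norm, submultiplicativity, C*-identity\<close>
     (\<forall>a\<in>X. nm a \<ge> 0 \<and> (nm a = 0 \<longleftrightarrow> a = z)) \<and>
     (\<forall>a\<in>X. \<forall>b\<in>X. nm (p a b) \<le> nm a + nm b) \<and>
     (\<forall>c. \<forall>a\<in>X. nm (s c a) = cmod c * nm a) \<and>
     (\<forall>a\<in>X. \<forall>b\<in>X. nm (m a b) \<le> nm a * nm b) \<and>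
     (\<forall>a\<in>X. nm (m (st a) a) = (nm a)\<^sup>2) \<and>
     \<comment> \<open>completeness\<close>
     (\<forall>f :: nat \<Rightarrow> _. (\<forall>k. f k \<in> X) \<and>
          (\<forall>e>0. \<exists>N. \<forall>i\<ge>N. \<forall>j\<ge>N. nm (cs_sub A (f i) (f j)) < e)
          \<longrightarrow> (\<exists>a\<in>X. cs_lim A f a)))"

definition cs_pos :: "'a cstar_data \<Rightarrow> 'a \<Rightarrow> bool" where
  "cs_pos A a \<longleftrightarrow> a \<in> cs_carrier A \<and> (\<exists>x\<in>cs_carrier A. a = cs_mult A (cs_star A x) x)"

primrec cs_sum :: "'a cstar_data \<Rightarrow> (nat \<Rightarrow> 'a) \<Rightarrow> nat \<Rightarrow> 'a" where
  "cs_sum A f 0 = cs_zero A"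
| "cs_sum A f (Suc n) = cs_add A (cs_sum A f n) (f n)"

text \<open>An element of M_n(A) is represented by a function nat => nat => 'a,
  only the entries with indices below n are relevant.\<close>
definition mat_in :: "'a cstar_data \<Rightarrow> nat \<Rightarrow> (nat \<Rightarrow> nat \<Rightarrow> 'a) \<Rightarrow> bool" where
  "mat_in A n x \<longleftrightarrow> (\<forall>i<n. \<forall>j<n. x i j \<in> cs_carrier A)"

definition mat_mult :: "'a cstar_data \<Rightarrow> nat \<Rightarrow> (nat \<Rightarrow> nat \<Rightarrow> 'a) \<Rightarrow> (nat \<Rightarrow> nat \<Rightarrow> 'a) \<Rightarrow> nat \<Rightarrow> nat \<Rightarrow> 'a" where
  "mat_mult A n x y = (\<lambda>i j. cs_sum A (\<lambda>l. cs_mult A (x i l) (y l j)) n)"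

definition mat_adj :: "'a cstar_data \<Rightarrow> (nat \<Rightarrow> nat \<Rightarrow> 'a) \<Rightarrow> nat \<Rightarrow> nat \<Rightarrow> 'a" where
  "mat_adj A x = (\<lambda>i j. cs_star A (x j i))"

text \<open>Norm convergence in M_n(A). All C*-norm topologies on M_n(A) coincide with
  entrywise convergence (||x_ij|| <= ||x|| <= sum ||x_ij||).\<close>
definition mat_lim :: "'a cstar_data \<Rightarrow> nat \<Rightarrow> (nat \<Rightarrow> nat \<Rightarrow> nat \<Rightarrow> 'a) \<Rightarrow> (nat \<Rightarrow> nat \<Rightarrow> 'a) \<Rightarrow> bool" where
  "mat_lim A n f x \<longleftrightarrow> (\<forall>i<n. \<forall>j<n. cs_lim A (\<lambda>k. f k i j) (x i j))"

definition cuntz_le :: "'a cstar_data \<Rightarrow> nat \<Rightarrow> (nat \<Rightarrow> nat \<Rightarrow> 'a) \<Rightarrow> (nat \<Rightarrow> nat \<Rightarrow> 'a) \<Rightarrow> bool" where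
  "cuntz_le A n a b \<longleftrightarrow>
     (\<exists>r. (\<forall>k. mat_in A n (r k)) \<and>
          mat_lim A n (\<lambda>k. mat_mult A n (mat_mult A n (r k) b) (mat_adj A (r k))) a)"

definition cuntz_eq :: "'a cstar_data \<Rightarrow> nat \<Rightarrow> (nat \<Rightarrow> nat \<Rightarrow> 'a) \<Rightarrow> (nat \<Rightarrow> nat \<Rightarrow> 'a) \<Rightarrow> bool" where
  "cuntz_eq A n a b \<longleftrightarrow> cuntz_le A n a b \<and> cuntz_le A n b a"

text \<open>a^{\<oplus>m} = diag(a,...,a) (m copies), embedded in the upper-left corner.\<close>
definition diag_rep :: "'a cstar_data \<Rightarrow> nat \<Rightarrow> 'a \<Rightarrow> nat \<Rightarrow> nat \<Rightarrow> 'a" where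
  "diag_rep A m a = (\<lambda>i j. if i = j \<and> i < m then a else cs_zero A)"

definition n_weakly_purely_infinite :: "'a cstar_data \<Rightarrow> nat \<Rightarrow> bool" where
  "n_weakly_purely_infinite A n \<longleftrightarrow>
     (\<forall>a. cs_pos A a \<longrightarrow> cuntz_eq A (n + 1) (diag_rep A n a) (diag_rep A (n + 1) a))"

definition weakly_purely_infinite :: "'a cstar_data \<Rightarrow> bool" where
  "weakly_purely_infinite A \<longleftrightarrow> (\<exists>n\<ge>1. n_weakly_purely_infinite A n)"

definition closed_ideal :: "'a cstar_data \<Rightarrow> 'a set \<Rightarrow> bool" where
  "closed_ideal A I \<longleftrightarrow>
     I \<subseteq> cs_carrier A \<and> cs_zero A \<in> I \<and>
     (\<forall>a\<in>I. \<forall>b\<in>I. cs_add A a b \<in> I) \<and>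
     (\<forall>c. \<forall>a\<in>I. cs_scale A c a \<in> I) \<and>
     (\<forall>a\<in>I. \<forall>x\<in>cs_carrier A. cs_mult A x a \<in> I \<and> cs_mult A a x \<in> I) \<and>
     (\<forall>(f :: nat \<Rightarrow> 'a) a. (\<forall>k. f k \<in> I) \<and> a \<in> cs_carrier A \<and> cs_lim A f a \<longrightarrow> a \<in> I)"

record 'h hilbert_data =
  hs_carrier :: "'h set"
  hs_zero :: 'h
  hs_add :: "'h \<Rightarrow> 'h \<Rightarrow> 'h"
  hs_scale :: "complex \<Rightarrow> 'h \<Rightarrow> 'h"
  hs_inner :: "'h \<Rightarrow> 'h \<Rightarrow> complex"

definition hs_norm :: "'h hilbert_data \<Rightarrow> 'h \<Rightarrow> real" where
  "hs_norm H x = sqrt (Re (hs_inner H x x))"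

definition hs_sub :: "'h hilbert_data \<Rightarrow> 'h \<Rightarrow> 'h \<Rightarrow> 'h" where
  "hs_sub H x y = hs_add H x (hs_scale H (-1) y)"

definition hs_lim :: "'h hilbert_data \<Rightarrow> (nat \<Rightarrow> 'h) \<Rightarrow> 'h \<Rightarrow> bool" where
  "hs_lim H f x \<longleftrightarrow> (\<lambda>k. hs_norm H (hs_sub H (f k) x)) \<longlonglongrightarrow> 0"

definition hilbert_space :: "'h hilbert_data \<Rightarrow> bool" where
  "hilbert_space H \<longleftrightarrow>
    (let X = hs_carrier H; z = hs_zero H; p = hs_add H; s = hs_scale H; ip = hs_inner H in
     z \<in> X \<and>
     (\<forall>a\<in>X. \<forall>b\<in>X. p a b \<in> X) \<and>
     (\<forall>c. \<forall>a\<in>X. s c a \<in> X) \<and>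
     (\<forall>a\<in>X. \<forall>b\<in>X. \<forall>c\<in>X. p (p a b) c = p a (p b c)) \<and>
     (\<forall>a\<in>X. \<forall>b\<in>X. p a b = p b a) \<and>
     (\<forall>a\<in>X. p z a = a) \<and>
     (\<forall>a\<in>X. p a (s (-1) a) = z) \<and>
     (\<forall>c. \<forall>a\<in>X. \<forall>b\<in>X. s c (p a b) = p (s c a) (s c b)) \<and>
     (\<forall>c d. \<forall>a\<in>X. s (c + d) a = p (s c a) (s d a)) \<and>
     (\<forall>c d. \<forall>a\<in>X. s (c * d) a = s c (s d a)) \<and>
     (\<forall>a\<in>X. s 1 a = a) \<and>
     \<comment> \<open>inner product: linear in the first, conjugate symmetric, positive definite\<close>
     (\<forall>a\<in>X. \<forall>b\<in>X. \<forall>c\<in>X. ip (p a b) c = ip a c + ip b c) \<and>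
     (\<forall>k. \<forall>a\<in>X. \<forall>b\<in>X. ip (s k a) b = k * ip a b) \<and>
     (\<forall>a\<in>X. \<forall>b\<in>X. ip b a = cnj (ip a b)) \<and>
     (\<forall>a\<in>X. Im (ip a a) = 0 \<and> Re (ip a a) \<ge> 0 \<and> (ip a a = 0 \<longleftrightarrow> a = z)) \<and>
     \<comment> \<open>completeness\<close>
     (\<forall>f :: nat \<Rightarrow> _. (\<forall>k. f k \<in> X) \<and>
          (\<forall>e>0. \<exists>N. \<forall>i\<ge>N. \<forall>j\<ge>N. hs_norm H (hs_sub H (f i) (f j)) < e)
          \<longrightarrow> (\<exists>x\<in>X. hs_lim H f x)))"

definition compact_op :: "'h hilbert_data \<Rightarrow> ('h \<Rightarrow> 'h) \<Rightarrow> bool" where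
  "compact_op H T \<longleftrightarrow>
     (\<forall>x\<in>hs_carrier H. T x \<in> hs_carrier H) \<and>
     (\<forall>x\<in>hs_carrier H. \<forall>y\<in>hs_carrier H. T (hs_add H x y) = hs_add H (T x) (T y)) \<and>
     (\<forall>c. \<forall>x\<in>hs_carrier H. T (hs_scale H c x) = hs_scale H c (T x)) \<and>
     (\<forall>(f :: nat \<Rightarrow> 'h) M. (\<forall>k. f k \<in> hs_carrier H \<and> hs_norm H (f k) \<le> M) \<longrightarrow>
        (\<exists>g y. strict_mono g \<and> y \<in> hs_carrier H \<and> hs_lim H (\<lambda>k. T (f (g k))) y))"

text \<open>I/J is *-isomorphic to K(H): there is a surjective *-homomorphism
  phi : I \<rightarrow> K(H) with kernel exactly J (operators compared on the carrier of H).\<close>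
definition quotient_iso_compacts ::
  "'a cstar_data \<Rightarrow> 'a set \<Rightarrow> 'a set \<Rightarrow> 'h hilbert_data \<Rightarrow> ('a \<Rightarrow> 'h \<Rightarrow> 'h) \<Rightarrow> bool" where
  "quotient_iso_compacts A I J H \<phi> \<longleftrightarrow>
     (\<forall>a\<in>I. compact_op H (\<phi> a)) \<and>
     (\<forall>a\<in>I. \<forall>b\<in>I. \<forall>x\<in>hs_carrier H. \<phi> (cs_add A a b) x = hs_add H (\<phi> a x) (\<phi> b x)) \<and>
     (\<forall>c. \<forall>a\<in>I. \<forall>x\<in>hs_carrier H. \<phi> (cs_scale A c a) x = hs_scale H c (\<phi> a x)) \<and>
     (\<forall>a\<in>I. \<forall>b\<in>I. \<forall>x\<in>hs_carrier H. \<phi> (cs_mult A a b) x = \<phi> a (\<phi> b x)) \<and>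
     (\<forall>a\<in>I. \<forall>x\<in>hs_carrier H. \<forall>y\<in>hs_carrier H.
        hs_inner H (\<phi> a x) y = hs_inner H x (\<phi> (cs_star A a) y)) \<and>
     (\<forall>T. compact_op H T \<longrightarrow> (\<exists>a\<in>I. \<forall>x\<in>hs_carrier H. \<phi> a x = T x)) \<and>
     (\<forall>a\<in>I. a \<in> J \<longleftrightarrow> (\<forall>x\<in>hs_carrier H. \<phi> a x = hs_zero H))"

text \<open>Nowhere scattered, with Hilbert spaces ranging over the type 'h; the theorem
  leaves 'h free, hence quantifies over Hilbert spaces of every type.\<close>
definition nowhere_scattered :: "'h itself \<Rightarrow> 'a cstar_data \<Rightarrow> bool" where
  "nowhere_scattered (_ :: 'h itself) A \<longleftrightarrow>
     (\<forall>I J. closed_ideal A I \<and> closed_ideal A J \<and> J \<subseteq> I \<and> I \<noteq> J \<longrightarrow>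
        \<not> (\<exists>(H :: 'h hilbert_data) \<phi>. hilbert_space H \<and> quotient_iso_compacts A I J H \<phi>))"

end

(*
  Let J \<subseteq> I be closed ideals of A and \<phi> : I \<rightarrow> K(H) a surjective \<star>-homomorphism with
  kernel J. Lift the projection onto a unit vector e to p \<in> I. The vector state
  \<omega>(z) = <\<phi>(z) e, e> on I is bounded, vanishes on J and, because p - p\<^sup>2 \<in> J, factors
  as \<omega>(r p\<^sup>\<star> p r'\<^sup>\<star>) = \<omega>(r p\<^sup>\<star>) \<omega>(p r'\<^sup>\<star>). Applied entrywise to a Cuntz subequivalence
  a\<^sup>\<oplus>\<^sup>(\<^sup>n\<^sup>+\<^sup>1\<^sup>) \<precsim> a\<^sup>\<oplus>\<^sup>n with a = p\<^sup>\<star> p, it exhibits the identity matrix of size n + 1 as a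
  limit of products of (n+1) \<times> n and n \<times> (n+1) matrices, which is impossible.

  That p\<^sup>\<star> \<in> I uses the self-adjointness of closed ideals, proved here from the axioms
  alone: if y\<^sup>\<star> y \<in> K, then y - c y (y\<^sup>\<star> y)\<^sup>2 differs from y by an element of K and has
  smaller norm; the norm estimate only needs square roots of 1 - q, found as fixed points
  of a contraction.
*)

theory Submission
  imports Defs "HOL-Computational_Algebra.Fundamental_Theorem_Algebra"
begin

section \<open>Calculus in a C*-algebra\<close>

locale cstar =
  fixes A :: "'a cstar_data"
  assumes cstar_algebra: "cstar_algebra A"
begin

abbreviation "X \<equiv> cs_carrier A"
abbreviation "zr \<equiv> cs_zero A"
abbreviation "ad \<equiv> cs_add A"
abbreviation "sc \<equiv> cs_scale A"
abbreviation "mu \<equiv> cs_mult A"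
abbreviation "st \<equiv> cs_star A"
abbreviation "nm \<equiv> cs_norm A"
abbreviation "sb \<equiv> cs_sub A"

lemma
  shows zero_closed[simp]: "zr \<in> X"
    and add_closed[simp]: "a \<in> X \<Longrightarrow> b \<in> X \<Longrightarrow> ad a b \<in> X"
    and mult_closed[simp]: "a \<in> X \<Longrightarrow> b \<in> X \<Longrightarrow> mu a b \<in> X"
    and scale_closed[simp]: "a \<in> X \<Longrightarrow> sc c a \<in> X"
    and star_closed[simp]: "a \<in> X \<Longrightarrow> st a \<in> X"
    and add_assoc: "x \<in> X \<Longrightarrow> y \<in> X \<Longrightarrow> z \<in> X \<Longrightarrow> ad (ad x y) z = ad x (ad y z)"
    and add_commute: "a \<in> X \<Longrightarrow> b \<in> X \<Longrightarrow> ad a b = ad b a"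
    and add_zero_left[simp]: "a \<in> X \<Longrightarrow> ad zr a = a"
    and add_scale_minus_one: "a \<in> X \<Longrightarrow> ad a (sc (-1) a) = zr"
    and scale_add_right: "a \<in> X \<Longrightarrow> b \<in> X \<Longrightarrow> sc c (ad a b) = ad (sc c a) (sc c b)"
    and scale_add_left: "a \<in> X \<Longrightarrow> sc (c + d) a = ad (sc c a) (sc d a)"
    and scale_scale: "a \<in> X \<Longrightarrow> sc c (sc d a) = sc (c * d) a"
    and scale_one[simp]: "a \<in> X \<Longrightarrow> sc 1 a = a"
    and mult_assoc: "x \<in> X \<Longrightarrow> y \<in> X \<Longrightarrow> z \<in> X \<Longrightarrow> mu (mu x y) z = mu x (mu y z)"
    and distrib_left: "x \<in> X \<Longrightarrow> y \<in> X \<Longrightarrow> z \<in> X \<Longrightarrow> mu x (ad y z) = ad (mu x y) (mu x z)"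
    and distrib_right: "x \<in> X \<Longrightarrow> y \<in> X \<Longrightarrow> z \<in> X \<Longrightarrow> mu (ad x y) z = ad (mu x z) (mu y z)"
    and scale_mult_left: "a \<in> X \<Longrightarrow> b \<in> X \<Longrightarrow> mu (sc c a) b = sc c (mu a b)"
    and scale_mult_right: "a \<in> X \<Longrightarrow> b \<in> X \<Longrightarrow> mu a (sc c b) = sc c (mu a b)"
    and star_star[simp]: "a \<in> X \<Longrightarrow> st (st a) = a"
    and star_add: "a \<in> X \<Longrightarrow> b \<in> X \<Longrightarrow> st (ad a b) = ad (st a) (st b)"
    and star_scale: "a \<in> X \<Longrightarrow> st (sc c a) = sc (cnj c) (st a)"
    and star_mult: "a \<in> X \<Longrightarrow> b \<in> X \<Longrightarrow> st (mu a b) = mu (st b) (st a)"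
    and norm_nonneg[simp]: "a \<in> X \<Longrightarrow> nm a \<ge> 0"
    and norm_eq_zero_iff: "a \<in> X \<Longrightarrow> nm a = 0 \<longleftrightarrow> a = zr"
    and norm_triangle: "a \<in> X \<Longrightarrow> b \<in> X \<Longrightarrow> nm (ad a b) \<le> nm a + nm b"
    and norm_scale: "a \<in> X \<Longrightarrow> nm (sc c a) = cmod c * nm a"
    and norm_mult_le: "a \<in> X \<Longrightarrow> b \<in> X \<Longrightarrow> nm (mu a b) \<le> nm a * nm b"
    and norm_star_mult_self: "a \<in> X \<Longrightarrow> nm (mu (st a) a) = (nm a)\<^sup>2"
    and complete: "(\<And>k. f k \<in> X) \<Longrightarrow> (\<And>e. e > 0 \<Longrightarrow> \<exists>N. \<forall>i\<ge>N. \<forall>j\<ge>N. nm (sb (f i) (f j)) < e)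
      \<Longrightarrow> \<exists>a\<in>X. cs_lim A f a"
  by (insert cstar_algebra[unfolded cstar_algebra_def Let_def]; elim conjE; metis)+

lemma add_zero_right[simp]: "a \<in> X \<Longrightarrow> ad a zr = a"
  using add_commute[of a zr] by simp

lemma add_left_commute: "x \<in> X \<Longrightarrow> y \<in> X \<Longrightarrow> z \<in> X \<Longrightarrow> ad x (ad y z) = ad y (ad x z)"
  using add_assoc[of x y z] add_assoc[of y x z] add_commute[of x y] by simp

lemmas add_ac = add_assoc add_commute add_left_commute

lemma scale_zero_left[simp]: "a \<in> X \<Longrightarrow> sc 0 a = zr"
proof -
  assume a: "a \<in> X"
  define z where "z = sc 0 a"
  have z: "z \<in> X" "ad z z = z"
    using a scale_add_left[OF a, of 0 0] by (simp_all add: z_def)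
  have "zr = ad (ad z z) (sc (-1) z)" using z by (simp add: add_scale_minus_one)
  also have "\<dots> = ad z (ad z (sc (-1) z))" using z(1) by (simp only: add_assoc scale_closed)
  also have "\<dots> = z" using z by (simp add: add_scale_minus_one)
  finally show ?thesis by (simp add: z_def)
qed

lemma scale_zero_right[simp]: "sc c zr = zr"
  using scale_scale[of zr c 0] by simp

lemma mult_zero_left[simp]: "a \<in> X \<Longrightarrow> mu zr a = zr"
  using scale_mult_left[of zr a 0] by simp

lemma mult_zero_right[simp]: "a \<in> X \<Longrightarrow> mu a zr = zr"
  using scale_mult_right[of a zr 0] by simp

lemma star_zero[simp]: "st zr = zr"
  using star_scale[of zr 0] by simp

lemma sub_closed[simp]: "a \<in> X \<Longrightarrow> b \<in> X \<Longrightarrow> sb a b \<in> X"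
  by (simp add: cs_sub_def)

text \<open>Ordered rewriting with \<open>add_ac\<close> does not always place equal summands next to each
  other; these rules merge them when they meet at the head of a sum.\<close>

lemma scale_combine:
  "a \<in> X \<Longrightarrow> ad (sc c a) (sc d a) = sc (c + d) a"
  "a \<in> X \<Longrightarrow> b \<in> X \<Longrightarrow> ad (sc c a) (ad (sc d a) b) = ad (sc (c + d) a) b"
  "a \<in> X \<Longrightarrow> ad a (sc d a) = sc (1 + d) a"
  "a \<in> X \<Longrightarrow> ad (sc d a) a = sc (d + 1) a"
  "a \<in> X \<Longrightarrow> b \<in> X \<Longrightarrow> ad a (ad (sc d a) b) = ad (sc (1 + d) a) b"
  "a \<in> X \<Longrightarrow> b \<in> X \<Longrightarrow> ad (sc d a) (ad a b) = ad (sc (d + 1) a) b"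
  "a \<in> X \<Longrightarrow> ad a a = sc 2 a"
  "a \<in> X \<Longrightarrow> b \<in> X \<Longrightarrow> ad a (ad a b) = ad (sc 2 a) b"
  using scale_add_left[of a 1 1] by (simp_all add: scale_add_left add_assoc)

lemmas cstar_normalize = scale_add_right scale_scale scale_mult_left scale_mult_right
  distrib_left distrib_right mult_assoc star_add star_scale star_mult cs_sub_def add_ac scale_combine

lemma add_cancel_left:
  "a \<in> X \<Longrightarrow> b \<in> X \<Longrightarrow> ad a (ad (sc (-1) a) b) = b"
  "a \<in> X \<Longrightarrow> b \<in> X \<Longrightarrow> ad (sc (-1) a) (ad a b) = b"
  by (simp_all add: add_assoc[symmetric] add_scale_minus_one add_commute[of "sc (-1) a" a])

lemma sub_self[simp]: "a \<in> X \<Longrightarrow> sb a a = zr"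
  by (simp add: cs_sub_def add_scale_minus_one)

lemma sub_zero_right[simp]: "a \<in> X \<Longrightarrow> sb a zr = a"
  by (simp add: cs_sub_def)

lemma eq_if_sub_eq_zero: "a \<in> X \<Longrightarrow> b \<in> X \<Longrightarrow> sb a b = zr \<Longrightarrow> a = b"
proof -
  assume "a \<in> X" "b \<in> X" "sb a b = zr"
  moreover have "a = ad (sb a b) b" using \<open>a \<in> X\<close> \<open>b \<in> X\<close> by (simp add: cstar_normalize)
  ultimately show ?thesis by simp
qed

lemma mult_sub_left: "a \<in> X \<Longrightarrow> b \<in> X \<Longrightarrow> c \<in> X \<Longrightarrow> mu a (sb b c) = sb (mu a b) (mu a c)"
  by (simp add: cstar_normalize)

lemma mult_sub_right: "a \<in> X \<Longrightarrow> b \<in> X \<Longrightarrow> c \<in> X \<Longrightarrow> mu (sb a b) c = sb (mu a c) (mu b c)"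
  by (simp add: cstar_normalize)

lemma star_sub: "a \<in> X \<Longrightarrow> b \<in> X \<Longrightarrow> st (sb a b) = sb (st a) (st b)"
  by (simp add: cs_sub_def star_add star_scale)

lemma mult_left_commute:
  "a \<in> X \<Longrightarrow> b \<in> X \<Longrightarrow> x \<in> X \<Longrightarrow> mu a b = mu b a \<Longrightarrow> mu a (mu b x) = mu b (mu a x)"
  by (metis mult_assoc)

lemma norm_zero[simp]: "nm zr = 0"
  using norm_eq_zero_iff[of zr] by simp

lemma norm_minus: "a \<in> X \<Longrightarrow> nm (sc (-1) a) = nm a"
  by (simp add: norm_scale)

lemma norm_sub_commute: "a \<in> X \<Longrightarrow> b \<in> X \<Longrightarrow> nm (sb a b) = nm (sb b a)"
proof -
  assume "a \<in> X" "b \<in> X"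
  moreover from this have "sb b a = sc (-1) (sb a b)" by (simp add: cstar_normalize)
  ultimately show ?thesis by (simp add: norm_minus)
qed

lemma norm_sub_triangle: "a \<in> X \<Longrightarrow> b \<in> X \<Longrightarrow> c \<in> X \<Longrightarrow> nm (sb a c) \<le> nm (sb a b) + nm (sb b c)"
proof -
  assume "a \<in> X" "b \<in> X" "c \<in> X"
  moreover from this have "sb a c = ad (sb a b) (sb b c)" by (simp add: cstar_normalize add_cancel_left)
  ultimately show ?thesis using norm_triangle[of "sb a b" "sb b c"] by simp
qed

lemma norm_sub_le: "a \<in> X \<Longrightarrow> b \<in> X \<Longrightarrow> nm (sb a b) \<le> nm a + nm b"
  using norm_triangle[of a "sc (-1) b"] by (simp add: cs_sub_def norm_minus)

lemma eq_if_norm_sub_le_zero: "a \<in> X \<Longrightarrow> b \<in> X \<Longrightarrow> nm (sb a b) \<le> 0 \<Longrightarrow> a = b"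
  by (metis eq_if_sub_eq_zero norm_eq_zero_iff norm_nonneg order_antisym sub_closed)

lemma norm_star: assumes "a \<in> X" shows "nm (st a) = nm a"
proof -
  have le: "nm b \<le> nm (st b)" if b: "b \<in> X" for b
  proof -
    have "nm b * nm b \<le> nm (st b) * nm b"
      using norm_star_mult_self[OF b] norm_mult_le[of "st b" b] b by (simp add: power2_eq_square)
    thus ?thesis using norm_nonneg[OF b] norm_nonneg[of "st b"] b
      by (cases "nm b = 0") (simp_all add: mult_le_cancel_right)
  qed
  show ?thesis using le[OF assms] le[of "st a"] assms by simp
qed

lemma norm_mult_star_self: "a \<in> X \<Longrightarrow> nm (mu a (st a)) = (nm a)\<^sup>2"
  using norm_star_mult_self[of "st a"] norm_star[of a] by simp

lemma norm_sub_star: "a \<in> X \<Longrightarrow> b \<in> X \<Longrightarrow> nm (sb (st a) (st b)) = nm (sb a b)"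
  using norm_star[of "sb a b"] star_sub[of a b] by simp

lemma norm_eq_if_square_eq: "a \<in> X \<Longrightarrow> b \<in> X \<Longrightarrow> (nm a)\<^sup>2 = (nm b)\<^sup>2 \<Longrightarrow> nm a = nm b"
  using power2_eq_imp_eq norm_nonneg by metis

lemma cs_limI:
  fixes g :: "nat \<Rightarrow> real"
  assumes "g \<longlonglongrightarrow> 0" "\<And>k. nm (sb (f k) a) \<le> g k" "\<And>k. f k \<in> X" "a \<in> X"
  shows "cs_lim A f a"
  unfolding cs_lim_def
  by (rule tendsto_sandwich[of "\<lambda>_. 0" _ _ g]) (use assms in auto)

lemma eq_if_norm_sub_le_null_sequence:
  fixes g :: "nat \<Rightarrow> real"
  assumes "g \<longlonglongrightarrow> 0" "\<And>k. nm (sb a b) \<le> g k" "a \<in> X" "b \<in> X"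
  shows "a = b"
  using eq_if_norm_sub_le_zero LIMSEQ_le_const[OF assms(1)] assms by blast

lemma converges_if_geometric_cauchy:
  assumes f: "\<And>k. f k \<in> X" and cauchy: "\<And>i d. nm (sb (f (i + d)) (f i)) \<le> (1/2)^(i+1)"
  shows "\<exists>t\<in>X. cs_lim A f t"
proof (rule complete[OF f])
  fix e :: real assume "e > 0"
  then obtain N where N: "(1/2::real)^N < e" using real_arch_pow_inv[of e "1/2"] by auto
  have small: "(1/2::real)^(k+1) < e" if "N \<le> k" for k
    using power_decreasing[of N "k+1" "1/2::real"] N that by simp
  have "nm (sb (f i) (f j)) < e" if "N \<le> i" "i \<le> j" for i j
  proof -
    obtain d where "j = i + d" using \<open>i \<le> j\<close> le_Suc_ex by blast
    thus ?thesis using cauchy[of i d] small[OF \<open>N \<le> i\<close>] norm_sub_commute f by (metis order.strict_trans1)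
  qed
  hence "nm (sb (f i) (f j)) < e" if "N \<le> i" "N \<le> j" for i j
    using that norm_sub_commute f by (cases "i \<le> j") (auto, metis nat_le_linear)
  thus "\<exists>N. \<forall>i\<ge>N. \<forall>j\<ge>N. nm (sb (f i) (f j)) < e" by blast
qed

lemma cs_lim_norm_le:
  assumes "cs_lim A f t" "\<And>k. f k \<in> X" "t \<in> X" "\<And>k. nm (f k) \<le> r"
  shows "nm t \<le> r"
proof -
  have "nm t - r \<le> nm (sb (f k) t)" for k
    using norm_sub_triangle[of t "f k" zr] norm_sub_commute[of t "f k"]
    assms(2)[of k] assms(3) assms(4)[of k] by simp
  thus ?thesis using LIMSEQ_le_const[OF assms(1)[unfolded cs_lim_def], of "nm t - r"] by auto
qed

lemma cs_lim_star_eq: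
  assumes "cs_lim A f t" "\<And>k. f k \<in> X" "t \<in> X" "\<And>k. st (f k) = f k"
  shows "st t = t"
proof (rule eq_if_norm_sub_le_null_sequence)
  show "(\<lambda>k. 2 * nm (sb (f k) t)) \<longlonglongrightarrow> 0"
    using assms(1) tendsto_mult_right_zero unfolding cs_lim_def by blast
  show "nm (sb (st t) t) \<le> 2 * nm (sb (f k) t)" for k
    using norm_sub_triangle[of "st t" "f k" t] norm_sub_star[of t "f k"] norm_sub_commute[of t "f k"]
      assms(2)[of k] assms(3) assms(4)[of k] by simp
qed (use assms in auto)

lemma cs_lim_commute:
  assumes "cs_lim A f t" "\<And>k. f k \<in> X" "t \<in> X" "h \<in> X" "\<And>k. mu h (f k) = mu (f k) h"
  shows "mu h t = mu t h"
proof (rule eq_if_norm_sub_le_null_sequence)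
  show "(\<lambda>k. 2 * nm h * nm (sb (f k) t)) \<longlonglongrightarrow> 0"
    using assms(1) tendsto_mult_right_zero unfolding cs_lim_def by blast
  fix k
  have "nm (sb (mu h t) (mu t h)) \<le> nm (mu h (sb t (f k))) + nm (mu (sb (f k) t) h)"
    using norm_sub_triangle[of "mu h t" "mu h (f k)" "mu t h"] assms(2-5)
    by (simp add: mult_sub_left mult_sub_right)
  also have "\<dots> \<le> nm h * nm (sb (f k) t) + nm (sb (f k) t) * nm h"
    using norm_mult_le[of h "sb t (f k)"] norm_mult_le[of "sb (f k) t" h] norm_sub_commute[of t "f k"]
      assms(2-4) by (intro add_mono) simp_all
  finally show "nm (sb (mu h t) (mu t h)) \<le> 2 * nm h * nm (sb (f k) t)" by (simp add: algebra_simps)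
qed (use assms in auto)

lemma cs_sum_cong: "(\<And>l. l < N \<Longrightarrow> f l = g l) \<Longrightarrow> cs_sum A f N = cs_sum A g N"
  by (induct N) auto

lemma cs_sum_zero: "(\<And>l. l < N \<Longrightarrow> f l = zr) \<Longrightarrow> cs_sum A f N = zr"
  by (induct N) auto

lemma cs_sum_single:
  assumes "m < N" "f m \<in> X" "\<And>l. l < N \<Longrightarrow> l \<noteq> m \<Longrightarrow> f l = zr"
  shows "cs_sum A f N = f m"
  using assms
proof (induct N)
  case (Suc N)
  have "cs_sum A f N = zr" if "m = N" using Suc.prems that by (intro cs_sum_zero) auto
  thus ?case using Suc by (cases "m = N") auto
qed simp

lemma mat_entry_conj_diag_rep:
  assumes R: "mat_in A (n+1) R" and a: "a \<in> X" and ij: "i < n+1" "j < n+1"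
  shows "mat_mult A (n+1) (mat_mult A (n+1) R (diag_rep A n a)) (mat_adj A R) i j
    = cs_sum A (\<lambda>m. if m < n then mu (mu (R i m) a) (st (R j m)) else zr) (n+1)"
  unfolding mat_mult_def mat_adj_def
proof (rule cs_sum_cong)
  fix m assume m: "m < n+1"
  have RX: "R i l \<in> X" "R j l \<in> X" if "l < n+1" for l using R ij that by (auto simp: mat_in_def)
  have "cs_sum A (\<lambda>l. mu (R i l) (diag_rep A n a l m)) (n+1) = (if m < n then mu (R i m) a else zr)"
  proof (cases "m < n")
    case True thus ?thesis using m a RX by (subst cs_sum_single[of m]) (auto simp: diag_rep_def)
  next
    case False thus ?thesis using RX by (subst cs_sum_single[of 0]) (auto simp: diag_rep_def)
  qed
  thus "mu (cs_sum A (\<lambda>l. mu (R i l) (diag_rep A n a l m)) (n+1)) (st (R j m))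
      = (if m < n then mu (mu (R i m) a) (st (R j m)) else zr)" using RX[OF m] by simp
qed

section \<open>Square roots and a polynomial norm estimate\<close>

text \<open>\<open>A\<close> need not be unital. A fixed point \<open>t\<close> of \<open>sqrt_step q\<close> satisfies
  \<open>(1 + t)\<^sup>2 = 1 - q\<close> in the unitization, so \<open>1 + t\<close> is a square root of \<open>1 - q\<close>.\<close>

definition sqrt_step :: "'a \<Rightarrow> 'a \<Rightarrow> 'a" where
  "sqrt_step q s = sc (-1/2) (ad q (mu s s))"

primrec sqrt_iter :: "'a \<Rightarrow> nat \<Rightarrow> 'a" where
  "sqrt_iter q 0 = zr"
| "sqrt_iter q (Suc n) = sqrt_step q (sqrt_iter q n)"

lemma sqrt_step_closed[simp]: "q \<in> X \<Longrightarrow> s \<in> X \<Longrightarrow> sqrt_step q s \<in> X"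
  by (simp add: sqrt_step_def)

lemma norm_sqrt_step:
  assumes "q \<in> X" "s \<in> X" "nm q \<le> 4/9" "nm s \<le> 1/2"
  shows "nm (sqrt_step q s) \<le> 1/2"
proof -
  have "nm (mu s s) \<le> 1/2 * (1/2)"
    using assms norm_mult_le[of s s] mult_mono[of "nm s" "1/2" "nm s" "1/2"] by simp
  hence "nm (ad q (mu s s)) \<le> 4/9 + 1/4" using norm_triangle[of q "mu s s"] assms by simp
  thus ?thesis using assms by (simp add: sqrt_step_def norm_scale)
qed

lemma sqrt_step_contraction:
  assumes X: "q \<in> X" "s \<in> X" "s' \<in> X" and small: "nm s \<le> 1/2" "nm s' \<le> 1/2"
  shows "nm (sb (sqrt_step q s) (sqrt_step q s')) \<le> 1/2 * nm (sb s s')"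
proof -
  have "sb (sqrt_step q s) (sqrt_step q s') = sc (-1/2) (ad (mu s (sb s s')) (mu (sb s s') s'))"
    using X by (simp add: sqrt_step_def cstar_normalize)
  moreover have "nm (ad (mu s (sb s s')) (mu (sb s s') s')) \<le> nm s * nm (sb s s') + nm (sb s s') * nm s'"
    using X norm_triangle[of "mu s (sb s s')" "mu (sb s s') s'"] norm_mult_le[of s "sb s s'"]
      norm_mult_le[of "sb s s'" s'] by simp
  moreover have "\<dots> \<le> 1/2 * nm (sb s s') + nm (sb s s') * (1/2)"
    using small X by (intro add_mono mult_mono) auto
  ultimately show ?thesis using X by (simp add: norm_scale)
qed

lemma sqrt_iter:
  assumes q: "q \<in> X" "st q = q" "nm q \<le> 4/9"
  shows sqrt_iter_closed: "sqrt_iter q n \<in> X"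
    and norm_sqrt_iter: "nm (sqrt_iter q n) \<le> 1/2"
    and star_sqrt_iter: "st (sqrt_iter q n) = sqrt_iter q n"
  by (induct n) (use q norm_sqrt_step in \<open>simp_all add: sqrt_step_def cstar_normalize\<close>)

lemma sqrt_iter_commute:
  assumes "q \<in> X" "h \<in> X" "mu h q = mu q h"
  shows "mu h (sqrt_iter q n) = mu (sqrt_iter q n) h"
proof (induct n)
  case (Suc n)
  have "sqrt_iter q n \<in> X" using assms(1) by (induct n) simp_all
  thus ?case
    using assms Suc mult_left_commute[of h "sqrt_iter q n"] mult_left_commute[of h q]
    by (simp add: sqrt_step_def cstar_normalize)
qed (use assms in simp)

lemma sqrt_iter_cauchy:
  assumes q: "q \<in> X" "st q = q" "nm q \<le> 4/9"
  shows "nm (sb (sqrt_iter q (i + d)) (sqrt_iter q i)) \<le> (1/2)^(i+1)"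
proof (induct i)
  case 0
  show ?case using norm_sqrt_iter[OF q, of d] sqrt_iter_closed[OF q] by simp
next
  case (Suc i)
  have "nm (sb (sqrt_iter q (Suc i + d)) (sqrt_iter q (Suc i)))
      \<le> 1/2 * nm (sb (sqrt_iter q (i + d)) (sqrt_iter q i))"
    using sqrt_step_contraction sqrt_iter_closed[OF q] norm_sqrt_iter[OF q] q by simp
  also have "\<dots> \<le> 1/2 * (1/2)^(i+1)" using Suc by simp
  finally show ?case by simp
qed

lemma sqrt_step_fixed_point:
  assumes q: "q \<in> X" "st q = q" "nm q \<le> 4/9" and h: "h \<in> X" "mu h q = mu q h"
  obtains t where "t \<in> X" "st t = t" "mu h t = mu t h" "nm t \<le> 1/2" "sqrt_step q t = t"
proof -
  let ?T = "sqrt_iter q"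
  note T = sqrt_iter_closed[OF q] norm_sqrt_iter[OF q] star_sqrt_iter[OF q]
  obtain t where t: "t \<in> X" and lim: "cs_lim A ?T t"
    using converges_if_geometric_cauchy[OF T(1) sqrt_iter_cauchy[OF q]] by blast
  have small: "nm t \<le> 1/2" by (rule cs_lim_norm_le[OF lim T(1) t T(2)])
  have "sqrt_step q t = t"
  proof (rule eq_if_norm_sub_le_null_sequence)
    let ?d = "\<lambda>k. nm (sb (?T k) t)"
    have d: "?d \<longlonglongrightarrow> 0" using lim by (simp add: cs_lim_def)
    show "(\<lambda>k. 1/2 * ?d k + ?d (Suc k)) \<longlonglongrightarrow> 0"
      using tendsto_add[OF tendsto_mult_right_zero[OF d, of "1/2"] LIMSEQ_Suc[OF d]] by simp
    fix k
    have "nm (sb (sqrt_step q t) t) \<le> nm (sb (sqrt_step q t) (sqrt_step q (?T k))) + ?d (Suc k)"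
      using norm_sub_triangle[of "sqrt_step q t" "sqrt_step q (?T k)" t] T t q by simp
    also have "\<dots> \<le> 1/2 * ?d k + ?d (Suc k)"
      using sqrt_step_contraction[OF q(1) t T(1) small T(2)] norm_sub_commute[OF t T(1)] by simp
    finally show "nm (sb (sqrt_step q t) t) \<le> 1/2 * ?d k + ?d (Suc k)" .
  qed (use t q in auto)
  thus ?thesis
    using that t small cs_lim_star_eq[OF lim T(1) t T(3)]
      cs_lim_commute[OF lim T(1) t h(1) sqrt_iter_commute[OF q(1) h]] by blast
qed

lemma norm_add_imaginary:
  assumes X: "u \<in> X" "v \<in> X" "x \<in> X"
    and comm: "mu (st u) v = mu (st v) u"
    and sum: "ad (mu (st u) u) (mu (st v) v) = mu (st x) x"
  shows "nm (ad u (sc \<i> v)) = nm x" "nm (ad u (sc (-\<i>) v)) = nm x"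
proof -
  have "mu (st (ad u (sc c v))) (ad u (sc c v)) = mu (st x) x" if "c = \<i> \<or> c = -\<i>" for c
    using X comm that by (auto simp: sum[symmetric] cstar_normalize)
  hence "(nm (ad u (sc c v)))\<^sup>2 = (nm x)\<^sup>2" if "c = \<i> \<or> c = -\<i>" for c
    using that norm_star_mult_self X by (metis add_closed scale_closed)
  thus "nm (ad u (sc \<i> v)) = nm x" "nm (ad u (sc (-\<i>) v)) = nm x"
    using norm_eq_if_square_eq X by simp_all
qed

text \<open>With \<open>s = 1 + t\<close> the hypotheses say \<open>(c h)\<^sup>2 + s\<^sup>2 = 1\<close> for commuting
  self-adjoint \<open>c h\<close> and \<open>s\<close>, so \<open>x \<mapsto> c h x \<plusminus> \<i> s x\<close> preserve norms. Hence \<open>s\<close> is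
  contractive, and \<open>4 \<i> c h s\<close>, the difference of the squares of these two maps, has norm
  at most 2.\<close>

lemma sqrt_contractions:
  assumes h: "h \<in> X" "st h = h" and t: "t \<in> X" "st t = t" "mu h t = mu t h"
    and c: "cnj c = c" and tt: "mu t t = ad (sc (-2) t) (sc (-(c*c)) (mu h h))"
    and x: "x \<in> X"
  shows "nm (ad x (mu t x)) \<le> nm x" "nm (mu (sc c (ad h (mu h t))) x) \<le> 1/2 * nm x"
proof -
  have ttx: "mu t (mu t y) = ad (sc (-2) (mu t y)) (sc (-(c*c)) (mu h (mu h y)))" if "y \<in> X" for y
  proof -
    have "mu t (mu t y) = mu (mu t t) y" using t(1) that by (simp add: mult_assoc)
    thus ?thesis using h t(1) that by (simp add: tt cstar_normalize)
  qed
  have thy: "mu t (mu h y) = mu h (mu t y)" if "y \<in> X" for y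
    using mult_left_commute[OF h(1) t(1) that t(3)] by simp
  define U where "U y = sc c (mu h y)" for y
  define B where "B y = ad y (mu t y)" for y
  define W where "W y = ad (U y) (sc \<i> (B y))" for y
  define W' where "W' y = ad (U y) (sc (-\<i>) (B y))" for y
  have UB: "U y \<in> X" "B y \<in> X" "W y \<in> X" "W' y \<in> X" if "y \<in> X" for y
    using that h t by (simp_all add: U_def B_def W_def W'_def)
  have W: "nm (W y) = nm y" "nm (W' y) = nm y" if y: "y \<in> X" for y
    unfolding W_def W'_def
    by (rule norm_add_imaginary[OF UB(1,2)[OF y] y];
        use y h t in \<open>simp add: U_def B_def cstar_normalize c thy ttx\<close>)+
  have "sb (W x) (W' x) = sc (2*\<i>) (B x)" using x h t by (simp add: W_def W'_def U_def B_def cstar_normalize)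
  hence "2 * nm (B x) \<le> 2 * nm x"
    using norm_sub_le[of "W x" "W' x"] W[OF x] UB[OF x] by (simp add: norm_scale)
  thus "nm (ad x (mu t x)) \<le> nm x" by (simp add: B_def)
  have "sb (W (W x)) (W' (W' x)) = sc (4*\<i>) (mu (sc c (ad h (mu h t))) x)"
    using x h t by (simp add: W_def W'_def U_def B_def cstar_normalize thy ttx t(3) mult.assoc)
  hence "4 * nm (mu (sc c (ad h (mu h t))) x) \<le> 2 * nm x"
    using norm_sub_le[of "W (W x)" "W' (W' x)"] W[OF x] W[OF UB(3)[OF x]] W[OF UB(4)[OF x]]
      UB[OF x] UB[OF UB(3)[OF x]] UB[OF UB(4)[OF x]] x h t
    by (simp add: norm_scale)
  thus "nm (mu (sc c (ad h (mu h t))) x) \<le> 1/2 * nm x" by simp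
qed

lemma sqrt_one_minus_square_exists:
  assumes h: "h \<in> X" "st h = h" and c: "cnj c = c" "cmod c * nm h \<le> 2/3"
  obtains t where "t \<in> X" "st t = t" "mu h t = mu t h" "mu t t = ad (sc (-2) t) (sc (-(c*c)) (mu h h))"
proof -
  define q where "q = sc (c*c) (mu h h)"
  have "nm q \<le> cmod c * cmod c * (nm h * nm h)"
    using norm_mult_le[of h h] h by (simp add: q_def norm_scale norm_mult mult_left_mono)
  also have "\<dots> = (cmod c * nm h)\<^sup>2" by (simp add: power2_eq_square)
  also have "\<dots> \<le> (2/3)\<^sup>2" using c(2) h by (intro power_mono) auto
  finally have q: "q \<in> X" "st q = q" "nm q \<le> 4/9" "mu h q = mu q h"
    using h c by (simp_all add: q_def cstar_normalize power2_eq_square)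
  obtain t where t: "t \<in> X" "st t = t" "mu h t = mu t h" "sqrt_step q t = t"
    using sqrt_step_fixed_point[OF q(1-3) h(1) q(4)] by blast
  have "sc (-2) t = ad q (mu t t)"
    by (subst t(4)[symmetric]) (simp add: sqrt_step_def scale_scale q(1) t(1))
  hence "mu t t = ad (sc (-1) q) (sc (-2) t)"
    using add_cancel_left(2)[of q "mu t t"] q(1) t(1) by simp
  hence "mu t t = ad (sc (-2) t) (sc (-(c*c)) (mu h h))"
    using h t(1) add_commute by (simp add: q_def scale_scale)
  thus ?thesis using that t by blast
qed

lemma norm_le_if_mult_left_le:
  assumes a: "a \<in> X" and r: "0 \<le> r" and le: "\<And>x. x \<in> X \<Longrightarrow> nm (mu a x) \<le> r * nm x"
  shows "nm a \<le> r"
proof -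
  have "nm a * nm a \<le> r * nm a"
    using le[of "st a"] norm_mult_star_self[OF a] norm_star[OF a] a by (simp add: power2_eq_square)
  thus ?thesis using r norm_nonneg[OF a] by (cases "nm a = 0") (simp_all add: mult_le_cancel_right)
qed

lemma norm_sub_cube_le:
  assumes h: "h \<in> X" "st h = h"
  shows "nm (sb h (sc (complex_of_real (4 / (9 * (nm h)\<^sup>2))) (mu h (mu h h)))) \<le> 3/4 * nm h"
proof (cases "nm h = 0")
  case True
  thus ?thesis using h norm_eq_zero_iff by simp
next
  case False
  hence hpos: "nm h > 0" using norm_nonneg[OF h(1)] by linarith
  define c where "c = complex_of_real (2 / (3 * nm h))"
  have c: "cnj c = c" "c * c = complex_of_real (4 / (9 * (nm h)\<^sup>2))"
    using hpos by (simp_all add: c_def power2_eq_square)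
  have cmod_c: "cmod c = 2 / (3 * nm h)" using hpos unfolding c_def norm_of_real by simp
  obtain t where t: "t \<in> X" "st t = t" "mu h t = mu t h"
    and tt: "mu t t = ad (sc (-2) t) (sc (-(c*c)) (mu h h))"
    using sqrt_one_minus_square_exists[OF h c(1)] cmod_c hpos by auto
  define a where "a = sc c (ad h (mu h t))"
  have a: "a \<in> X" using h t by (simp add: a_def)
  note contr = sqrt_contractions[OF h t c(1) tt]
  have "nm a \<le> 1/2" using contr(2) by (intro norm_le_if_mult_left_le[OF a]) (simp_all add: a_def)
  moreover have "st (ad a (mu a t)) = ad (st a) (mu t (st a))"
    using a t by (simp add: cstar_normalize)
  ultimately have "nm (ad a (mu a t)) \<le> 1/2"
    using contr(1)[of "st a"] a t norm_star[of "ad a (mu a t)"] norm_star[of a] by simp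
  moreover have "ad a (mu a t) = sc c (sb h (sc (c*c) (mu h (mu h h))))"
    using h t(1) by (simp add: a_def cstar_normalize tt)
  ultimately have "2 / (3 * nm h) * nm (sb h (sc (c*c) (mu h (mu h h)))) \<le> 1/2"
    using cmod_c h by (simp add: norm_scale)
  thus ?thesis using hpos c(2) by (simp add: field_simps)
qed

end

section \<open>Closed ideals are self-adjoint\<close>

lemma closed_ideal:
  assumes "closed_ideal A K"
  shows closed_ideal_subset: "K \<subseteq> cs_carrier A"
    and closed_ideal_zero: "cs_zero A \<in> K"
    and closed_ideal_add: "a \<in> K \<Longrightarrow> b \<in> K \<Longrightarrow> cs_add A a b \<in> K"
    and closed_ideal_scale: "a \<in> K \<Longrightarrow> cs_scale A c a \<in> K"
    and closed_ideal_mult_left: "a \<in> K \<Longrightarrow> x \<in> cs_carrier A \<Longrightarrow> cs_mult A x a \<in> K"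
    and closed_ideal_mult_right: "a \<in> K \<Longrightarrow> x \<in> cs_carrier A \<Longrightarrow> cs_mult A a x \<in> K"
    and closed_ideal_limit: "(\<And>k. f k \<in> K) \<Longrightarrow> a \<in> cs_carrier A \<Longrightarrow> cs_lim A f a \<Longrightarrow> a \<in> K"
  using assms unfolding closed_ideal_def by blast+

lemma closed_ideal_sub: "closed_ideal A K \<Longrightarrow> a \<in> K \<Longrightarrow> b \<in> K \<Longrightarrow> cs_sub A a b \<in> K"
  by (simp add: cs_sub_def closed_ideal_add closed_ideal_scale)

lemma closed_ideal_cs_sum:
  "closed_ideal A K \<Longrightarrow> (\<And>l. l < N \<Longrightarrow> f l \<in> K) \<Longrightarrow> cs_sum A f N \<in> K"
  by (induct N) (auto intro: closed_ideal_add closed_ideal_zero)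

context cstar
begin

lemma norm_pow5_le: "h \<in> X \<Longrightarrow> nm (mu h (mu h (mu h (mu h h)))) \<le> (nm h)^5"
proof -
  assume h: "h \<in> X"
  have "nm (mu h y) \<le> nm h * b" if "y \<in> X" "nm y \<le> b" for y b
    using norm_mult_le[OF h that(1)] mult_left_mono[OF that(2) norm_nonneg[OF h]] by linarith
  thus ?thesis using h by (simp add: power_eq_if mult.assoc power2_eq_square)
qed

text \<open>With \<open>h = y\<^sup>* y\<close>, one step replaces \<open>y\<close> by \<open>y - 2/(9\<parallel>h\<parallel>\<^sup>2) y h\<^sup>2\<close>. The
  difference lies in every closed ideal containing \<open>h\<close>, and by \<open>norm_sub_cube_le\<close>
  the norm shrinks by the factor \<open>sqrt (3/4 + 4/81)\<close>.\<close>

definition ideal_step :: "'a \<Rightarrow> 'a" where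
  "ideal_step y = sb y (sc (complex_of_real (2 / (9 * (nm (mu (st y) y))\<^sup>2)))
     (mu y (mu (mu (st y) y) (mu (st y) y))))"

lemma ideal_step_closed[simp]: "y \<in> X \<Longrightarrow> ideal_step y \<in> X"
  by (simp add: ideal_step_def)

lemma ideal_step_expand:
  assumes y: "y \<in> X"
  defines "h \<equiv> mu (st y) y" and "\<kappa> \<equiv> complex_of_real (2 / (9 * (nm (mu (st y) y))\<^sup>2))"
  shows sub_ideal_step: "sb y (ideal_step y) = sc \<kappa> (mu y (mu h h))"
    and star_mult_ideal_step: "mu (st (ideal_step y)) (ideal_step y)
      = ad (sb h (sc (2 * \<kappa>) (mu h (mu h h)))) (sc (\<kappa> * \<kappa>) (mu h (mu h (mu h (mu h h)))))"
proof -
  have step: "ideal_step y = sb y (sc \<kappa> (mu y (mu h h)))" by (simp add: ideal_step_def h_def \<kappa>_def)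
  show "sb y (ideal_step y) = sc \<kappa> (mu y (mu h h))"
    using y by (simp add: step h_def cstar_normalize)
  have "cnj \<kappa> = \<kappa>" by (simp add: \<kappa>_def)
  thus "mu (st (ideal_step y)) (ideal_step y)
      = ad (sb h (sc (2 * \<kappa>) (mu h (mu h h)))) (sc (\<kappa> * \<kappa>) (mu h (mu h (mu h (mu h h)))))"
    using y unfolding step h_def by (simp add: cstar_normalize)
qed

lemma ideal_step_mem:
  assumes K: "closed_ideal A K" and y: "y \<in> X" and hK: "mu (st y) y \<in> K"
  shows "sb y (ideal_step y) \<in> K" "mu (st (ideal_step y)) (ideal_step y) \<in> K"
  using K y hK
  by (simp_all add: sub_ideal_step star_mult_ideal_step closed_ideal_scale closed_ideal_mult_left
      closed_ideal_mult_right closed_ideal_add closed_ideal_sub)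

lemma norm_ideal_step:
  assumes y: "y \<in> X"
  shows "(nm (ideal_step y))\<^sup>2 \<le> (3/4 + 4/81) * (nm y)\<^sup>2"
proof -
  define h where "h = mu (st y) y"
  define \<kappa> where "\<kappa> = complex_of_real (2 / (9 * (nm h)\<^sup>2))"
  have h: "h \<in> X" "st h = h" "nm h = (nm y)\<^sup>2"
    using y norm_star_mult_self[OF y] by (simp_all add: h_def star_mult)
  let ?h3 = "mu h (mu h h)" and ?h5 = "mu h (mu h (mu h (mu h h)))"
  have "(nm (ideal_step y))\<^sup>2 = nm (ad (sb h (sc (2 * \<kappa>) ?h3)) (sc (\<kappa> * \<kappa>) ?h5))"
    using norm_star_mult_self[of "ideal_step y"] star_mult_ideal_step[OF y] y by (simp add: h_def \<kappa>_def)
  also have "\<dots> \<le> nm (sb h (sc (2 * \<kappa>) ?h3)) + cmod (\<kappa> * \<kappa>) * nm ?h5"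
    using norm_triangle[of "sb h (sc (2 * \<kappa>) ?h3)" "sc (\<kappa> * \<kappa>) ?h5"] h by (simp add: norm_scale)
  also have "\<dots> \<le> 3/4 * nm h + cmod (\<kappa> * \<kappa>) * (nm h)^5"
    using norm_sub_cube_le[OF h(1,2)] norm_pow5_le[OF h(1)]
    by (intro add_mono mult_left_mono) (simp_all add: \<kappa>_def)
  also have "cmod (\<kappa> * \<kappa>) * (nm h)^5 = 4/81 * nm h"
  proof (cases "nm h = 0")
    case False
    have "cmod \<kappa> = 2 / (9 * (nm h)\<^sup>2)" unfolding \<kappa>_def norm_of_real by simp
    thus ?thesis using False
      by (simp only: norm_mult) (simp add: power2_eq_square field_simps numeral_eq_Suc)
  qed simp
  finally show ?thesis using h by (simp add: algebra_simps)
qed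

lemma closed_ideal_mem_if_star_mult_mem:
  assumes K: "closed_ideal A K" and y: "y \<in> X" and hK: "mu (st y) y \<in> K"
  shows "y \<in> K"
proof -
  define \<theta> :: real where "\<theta> = 3/4 + 4/81"
  define Y where "Y m = (ideal_step ^^ m) y" for m
  have Y: "Y m \<in> X \<and> mu (st (Y m)) (Y m) \<in> K \<and> sb y (Y m) \<in> K \<and> (nm (Y m))\<^sup>2 \<le> \<theta>^m * (nm y)\<^sup>2" for m
  proof (induct m)
    case 0 thus ?case using y hK closed_ideal_zero[OF K] by (simp add: Y_def)
  next
    case (Suc m)
    hence IH: "Y m \<in> X" "mu (st (Y m)) (Y m) \<in> K" "sb y (Y m) \<in> K" "(nm (Y m))\<^sup>2 \<le> \<theta>^m * (nm y)\<^sup>2"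
      by auto
    have YS: "Y (Suc m) = ideal_step (Y m)" by (simp add: Y_def)
    note step = ideal_step_mem[OF K IH(1,2), folded YS]
    have "sb y (Y (Suc m)) = ad (sb y (Y m)) (sb (Y m) (Y (Suc m)))"
      using IH(1) y by (simp add: YS cstar_normalize add_cancel_left)
    hence "sb y (Y (Suc m)) \<in> K" using closed_ideal_add[OF K IH(3) step(1)] by simp
    moreover have "(nm (Y (Suc m)))\<^sup>2 \<le> \<theta> * (\<theta>^m * (nm y)\<^sup>2)"
      using norm_ideal_step[OF IH(1)] mult_left_mono[OF IH(4), of \<theta>] by (simp add: YS \<theta>_def)
    ultimately show ?case using step IH(1) by (simp add: YS)
  qed
  define r where "r = sqrt \<theta>"
  have r: "0 \<le> r" "r < 1" "r\<^sup>2 = \<theta>" by (auto simp: r_def \<theta>_def)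
  have bound: "nm (Y m) \<le> r^m * nm y" for m
  proof (rule power2_le_imp_le)
    have "(r^m)\<^sup>2 = \<theta>^m" using r(3) by (metis power_mult mult.commute)
    thus "(nm (Y m))\<^sup>2 \<le> (r^m * nm y)\<^sup>2" using Y[of m] by (simp add: power_mult_distrib)
  qed (use r y in simp)
  have "(\<lambda>m. r^m * nm y) \<longlonglongrightarrow> 0" using r by (intro tendsto_mult_left_zero LIMSEQ_power_zero) auto
  hence "cs_lim A (\<lambda>m. sb y (Y m)) y"
  proof (rule cs_limI)
    fix m
    have "Y m \<in> X" using Y by blast
    hence "sb (sb y (Y m)) y = sc (-1) (Y m)" using y by (simp add: cstar_normalize add_cancel_left)
    thus "nm (sb (sb y (Y m)) y) \<le> r^m * nm y" using bound[of m] Y[of m] by (simp add: norm_minus)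
  qed (use Y y in auto)
  thus ?thesis using closed_ideal_limit[OF K, of "\<lambda>m. sb y (Y m)"] Y y by blast
qed

lemma closed_ideal_star_closed:
  assumes "closed_ideal A K" "a \<in> K"
  shows "st a \<in> K"
proof -
  have "a \<in> X" using assms closed_ideal_subset by blast
  thus ?thesis
    using assms closed_ideal_mult_right[OF assms, of "st a"] closed_ideal_mem_if_star_mult_mem[of K "st a"]
    by simp
qed

end

section \<open>Rank-one projections\<close>

locale hilbert =
  fixes H :: "'h hilbert_data"
  assumes hilbert_space: "hilbert_space H"
begin

abbreviation "HX \<equiv> hs_carrier H"
abbreviation "hz \<equiv> hs_zero H"
abbreviation "hp \<equiv> hs_add H"
abbreviation "hsc \<equiv> hs_scale H"
abbreviation "ip \<equiv> hs_inner H"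
abbreviation "hn \<equiv> hs_norm H"

lemma
  shows h_zero_closed[simp]: "hz \<in> HX"
    and h_add_closed[simp]: "x \<in> HX \<Longrightarrow> y \<in> HX \<Longrightarrow> hp x y \<in> HX"
    and h_scale_closed[simp]: "x \<in> HX \<Longrightarrow> hsc c x \<in> HX"
    and h_add_assoc: "x \<in> HX \<Longrightarrow> y \<in> HX \<Longrightarrow> z \<in> HX \<Longrightarrow> hp (hp x y) z = hp x (hp y z)"
    and h_add_commute: "x \<in> HX \<Longrightarrow> y \<in> HX \<Longrightarrow> hp x y = hp y x"
    and h_add_zero_left[simp]: "x \<in> HX \<Longrightarrow> hp hz x = x"
    and h_add_scale_minus_one: "x \<in> HX \<Longrightarrow> hp x (hsc (-1) x) = hz"
    and h_scale_add_left: "x \<in> HX \<Longrightarrow> hsc (c + d) x = hp (hsc c x) (hsc d x)"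
    and h_scale_scale: "x \<in> HX \<Longrightarrow> hsc c (hsc d x) = hsc (c * d) x"
    and h_scale_one[simp]: "x \<in> HX \<Longrightarrow> hsc 1 x = x"
    and inner_add_left: "x \<in> HX \<Longrightarrow> y \<in> HX \<Longrightarrow> z \<in> HX \<Longrightarrow> ip (hp x y) z = ip x z + ip y z"
    and inner_scale_left: "x \<in> HX \<Longrightarrow> y \<in> HX \<Longrightarrow> ip (hsc c x) y = c * ip x y"
    and inner_commute: "x \<in> HX \<Longrightarrow> y \<in> HX \<Longrightarrow> ip y x = cnj (ip x y)"
    and inner_self: "x \<in> HX \<Longrightarrow> Im (ip x x) = 0 \<and> Re (ip x x) \<ge> 0 \<and> (ip x x = 0 \<longleftrightarrow> x = hz)"
  by (insert hilbert_space[unfolded hilbert_space_def Let_def]; elim conjE; metis)+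

lemma inner_scale_right: "x \<in> HX \<Longrightarrow> y \<in> HX \<Longrightarrow> ip x (hsc c y) = cnj c * ip x y"
  by (metis complex_cnj_cnj complex_cnj_mult h_scale_closed inner_commute inner_scale_left)

lemma inner_add_right: "x \<in> HX \<Longrightarrow> y \<in> HX \<Longrightarrow> z \<in> HX \<Longrightarrow> ip x (hp y z) = ip x y + ip x z"
  by (metis complex_cnj_add h_add_closed inner_add_left inner_commute)

lemma inner_zero_left[simp]: "x \<in> HX \<Longrightarrow> ip hz x = 0"
  by (metis add_cancel_right_right h_add_zero_left h_zero_closed inner_add_left)

lemma inner_self_eq_norm_square: "x \<in> HX \<Longrightarrow> ip x x = complex_of_real ((hn x)\<^sup>2)"
  using inner_self[of x] by (simp add: hs_norm_def complex_eq_iff)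

lemma h_norm_nonneg[simp]: "x \<in> HX \<Longrightarrow> hn x \<ge> 0"
  using inner_self[of x] by (simp add: hs_norm_def)

lemma h_norm_scale: assumes "x \<in> HX" shows "hn (hsc c x) = cmod c * hn x"
proof -
  have "c * cnj c = complex_of_real ((cmod c)\<^sup>2)" by (metis complex_norm_square)
  moreover have "ip (hsc c x) (hsc c x) = c * cnj c * ip x x"
    using assms by (simp add: inner_scale_left inner_scale_right)
  ultimately have "complex_of_real ((hn (hsc c x))\<^sup>2) = complex_of_real ((cmod c)\<^sup>2 * (hn x)\<^sup>2)"
    using assms inner_self_eq_norm_square[of x] inner_self_eq_norm_square[of "hsc c x"] by simp
  hence "(hn (hsc c x))\<^sup>2 = (cmod c * hn x)\<^sup>2" by (simp only: of_real_eq_iff power_mult_distrib)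
  thus ?thesis using assms by simp
qed

lemma h_eq_if_sub_eq_zero:
  assumes "x \<in> HX" "y \<in> HX" "hp x (hsc (-1) y) = hz"
  shows "x = y"
proof -
  have "hp (hp x (hsc (-1) y)) y = hp x (hp (hsc (-1) y) y)" using assms(1,2) by (simp add: h_add_assoc)
  also have "hp (hsc (-1) y) y = hz"
    using assms(2) h_add_commute[of y "hsc (-1) y"] h_add_scale_minus_one[of y] by simp
  finally show ?thesis using assms h_add_commute[of x hz] by simp
qed

lemma norm_inner_unit_le:
  assumes x: "x \<in> HX" and e: "e \<in> HX" "ip e e = 1"
  shows "cmod (ip x e) \<le> hn x"
proof -
  define \<alpha> where "\<alpha> = ip x e"
  define w where "w = hp x (hsc (-\<alpha>) e)"
  have w: "w \<in> HX" using x e by (simp add: w_def)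
  have "ip e x = cnj \<alpha>" using inner_commute[of x e] x e by (simp add: \<alpha>_def)
  hence "ip w w = ip x x - \<alpha> * cnj \<alpha>"
    using x e by (simp add: w_def inner_add_left inner_add_right inner_scale_left inner_scale_right
        \<alpha>_def[symmetric] algebra_simps)
  moreover have "\<alpha> * cnj \<alpha> = complex_of_real ((cmod \<alpha>)\<^sup>2)" by (metis complex_norm_square)
  ultimately have "complex_of_real ((hn w)\<^sup>2) = complex_of_real ((hn x)\<^sup>2 - (cmod \<alpha>)\<^sup>2)"
    using inner_self_eq_norm_square[OF w] inner_self_eq_norm_square[OF x] by simp
  hence "(hn w)\<^sup>2 = (hn x)\<^sup>2 - (cmod (ip x e))\<^sup>2" by (simp only: of_real_eq_iff \<alpha>_def)
  hence "(cmod (ip x e))\<^sup>2 \<le> (hn x)\<^sup>2" by (metis diff_ge_0_iff_ge zero_le_power2)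
  thus ?thesis using h_norm_nonneg[OF x] by (rule power2_le_imp_le)
qed

definition proj :: "'h \<Rightarrow> 'h \<Rightarrow> 'h" where
  "proj e x = hsc (ip x e) e"

lemma proj_closed[simp]: "e \<in> HX \<Longrightarrow> x \<in> HX \<Longrightarrow> proj e x \<in> HX"
  by (simp add: proj_def)

lemma proj_idem: "e \<in> HX \<Longrightarrow> ip e e = 1 \<Longrightarrow> x \<in> HX \<Longrightarrow> proj e (proj e x) = proj e x"
  by (simp add: proj_def inner_scale_left h_scale_scale)

lemma compact_op_proj:
  assumes e: "e \<in> HX" "ip e e = 1"
  shows "compact_op H (proj e)"
  unfolding compact_op_def
proof (intro conjI ballI allI impI)
  fix x y assume "x \<in> HX" "y \<in> HX"
  thus "proj e (hp x y) = hp (proj e x) (proj e y)"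
    using e by (simp add: proj_def inner_add_left h_scale_add_left)
next
  fix c x assume "x \<in> HX"
  thus "proj e (hsc c x) = hsc c (proj e x)" using e by (simp add: proj_def inner_scale_left h_scale_scale)
next
  fix f :: "nat \<Rightarrow> 'h" and M :: real
  assume f: "\<forall>k. f k \<in> HX \<and> hn (f k) \<le> M"
  hence "\<forall>k. cmod (ip (f k) e) \<le> M" using norm_inner_unit_le e by (meson order_trans)
  from Bolzano_Weierstrass_complex_disc[OF this] obtain g z where g: "strict_mono g"
    and lim: "\<forall>\<epsilon>>0. \<exists>N::nat. \<forall>n\<ge>N. cmod (ip (f (g n)) e - z) < \<epsilon>"
    by blast
  have "(hn e)\<^sup>2 = 1" using inner_self_eq_norm_square[OF e(1)] e(2) by (metis of_real_eq_1_iff)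
  hence "hn e = 1" using h_norm_nonneg[OF e(1)] by (simp add: power2_eq_1_iff)
  moreover have "hs_sub H (hsc a e) (hsc b e) = hsc (a - b) e" for a b
    using e by (simp add: hs_sub_def h_scale_scale h_scale_add_left[symmetric])
  ultimately have "hn (hs_sub H (proj e (f (g k))) (hsc z e)) = cmod (ip (f (g k)) e - z)" for k
    using e by (simp add: proj_def h_norm_scale)
  hence "hs_lim H (\<lambda>k. proj e (f (g k))) (hsc z e)"
    unfolding hs_lim_def using lim by (simp add: LIMSEQ_iff)
  thus "\<exists>g y. strict_mono g \<and> y \<in> HX \<and> hs_lim H (\<lambda>k. proj e (f (g k))) y"
    using g e(1) by (intro exI[of _ g] exI[of _ "hsc z e"]) simp
qed (use e in simp)

end

section \<open>Matrices near the identity have full rank\<close>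

definition skip :: "nat \<Rightarrow> nat \<Rightarrow> nat" where
  "skip j0 j = (if j < j0 then j else Suc j)"

lemma sum_skip:
  fixes f :: "nat \<Rightarrow> 'b::comm_monoid_add"
  assumes "j0 < Suc N"
  shows "(\<Sum>j<Suc N. f j) = f j0 + (\<Sum>i<N. f (skip j0 i))"
proof -
  have "bij_betw (skip j0) {..<N} ({..<Suc N} - {j0})"
    unfolding bij_betw_def inj_on_def skip_def
  proof (intro conjI ballI impI equalityI subsetI)
    fix x assume x: "x \<in> {..<Suc N} - {j0}"
    show "x \<in> (\<lambda>j. if j < j0 then j else Suc j) ` {..<N}"
    proof (cases "x < j0")
      case True thus ?thesis using x assms by (auto intro!: image_eqI[of _ _ x])
    next
      case False thus ?thesis using x by (auto intro!: image_eqI[of _ _ "x - 1"])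
    qed
  qed (auto split: if_splits)
  hence "(\<Sum>j\<in>{..<Suc N} - {j0}. f j) = (\<Sum>i<N. f (skip j0 i))"
    by (simp add: sum.reindex_bij_betw)
  thus ?thesis using sum.remove[of "{..<Suc N}" j0 f] assms by (simp del: sum.lessThan_Suc)
qed

text \<open>Gaussian elimination: \<open>w\<close> solves the system with the unknown \<open>j0\<close> eliminated by
  means of equation \<open>m\<close>.\<close>

lemma back_substitution:
  fixes b :: "nat \<Rightarrow> nat \<Rightarrow> 'a::field"
  assumes j0: "j0 < Suc N" "b m j0 \<noteq> 0"
    and w: "\<forall>l<m. (\<Sum>i<N. (b l (skip j0 i) - b l j0 * b m (skip j0 i) / b m j0) * w i) = 0"
  shows "\<exists>z. (\<forall>i. z (skip j0 i) = w i) \<and> (\<forall>l<Suc m. (\<Sum>j<Suc N. b l j * z j) = 0)"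
proof (intro exI conjI allI impI)
  define S where "S = (\<Sum>i<N. b m (skip j0 i) * w i)"
  define z where "z j = (if j = j0 then - S / b m j0 else w (if j < j0 then j else j - 1))" for j
  show z_skip: "z (skip j0 i) = w i" for i by (auto simp: z_def skip_def)
  have split: "(\<Sum>j<Suc N. b l j * z j) = b l j0 * z j0 + (\<Sum>i<N. b l (skip j0 i) * w i)" for l
    using sum_skip[of j0 N "\<lambda>j. b l j * z j"] j0 z_skip by simp
  fix l assume "l < Suc m"
  show "(\<Sum>j<Suc N. b l j * z j) = 0"
  proof (cases "l = m")
    case True thus ?thesis using j0 by (simp only: split) (simp add: z_def S_def)
  next
    case False
    have "(\<Sum>j<Suc N. b l j * z j) = - (b l j0 / b m j0) * S + (\<Sum>i<N. b l (skip j0 i) * w i)"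
      using j0 by (simp only: split) (simp add: z_def)
    also have "\<dots> = (\<Sum>i<N. (b l (skip j0 i) - b l j0 * b m (skip j0 i) / b m j0) * w i)"
      by (simp add: S_def sum_distrib_left sum_subtractf[symmetric] sum.distrib[symmetric] algebra_simps)
    also have "\<dots> = 0" using w \<open>l < Suc m\<close> False by simp
    finally show ?thesis .
  qed
qed

lemma homogeneous_system_nontrivial_solution:
  fixes b :: "nat \<Rightarrow> nat \<Rightarrow> 'a::field"
  assumes "m < N"
  shows "\<exists>z. (\<exists>j<N. z j \<noteq> 0) \<and> (\<forall>l<m. (\<Sum>j<N. b l j * z j) = 0)"
  using assms
proof (induct m arbitrary: N b)
  case 0
  show ?case by (rule exI[of _ "\<lambda>j. if j = 0 then 1 else 0"]) (use 0 in auto)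
next
  case (Suc m)
  show ?case
  proof (cases "\<forall>j<N. b m j = 0")
    case True
    obtain z where z: "\<exists>j<N. z j \<noteq> 0" "\<forall>l<m. (\<Sum>j<N. b l j * z j) = 0"
      using Suc.hyps[of N b] Suc.prems by auto
    have "(\<Sum>j<N. b l j * z j) = 0" if "l < Suc m" for l
      using z True that by (cases "l = m") auto
    thus ?thesis using z by blast
  next
    case False
    then obtain j0 where j0: "j0 < N" "b m j0 \<noteq> 0" by auto
    obtain N' where N': "N = Suc N'" using Suc.prems by (cases N) auto
    obtain w where w: "\<exists>i<N'. w i \<noteq> 0"
      "\<forall>l<m. (\<Sum>i<N'. (b l (skip j0 i) - b l j0 * b m (skip j0 i) / b m j0) * w i) = 0"
      using Suc.hyps[of N' "\<lambda>l i. b l (skip j0 i) - b l j0 * b m (skip j0 i) / b m j0"] Suc.prems N'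
      by auto
    then obtain z where z: "\<forall>i. z (skip j0 i) = w i" "\<forall>l<Suc m. (\<Sum>j<N. b l j * z j) = 0"
      using back_substitution[of j0 N' b m w] j0 N' by auto
    obtain i where "i < N'" "w i \<noteq> 0" using w by blast
    hence "skip j0 i < N" "z (skip j0 i) \<noteq> 0" using N' z(1) by (auto simp: skip_def)
    thus ?thesis using z(2) by blast
  qed
qed

lemma near_identity_kernel_trivial:
  fixes G :: "nat \<Rightarrow> nat \<Rightarrow> 'a::real_normed_field"
  assumes near: "\<And>i j. i \<le> n \<Longrightarrow> j \<le> n \<Longrightarrow> norm (G i j - (if i = j then 1 else 0)) < 1 / Suc n"
    and kernel: "\<And>i. i \<le> n \<Longrightarrow> (\<Sum>j<Suc n. G i j * z j) = 0"
    and "j \<le> n"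
  shows "z j = 0"
proof (rule ccontr)
  assume "z j \<noteq> 0"
  obtain j0 where j0: "j0 < Suc n" "\<And>j. j < Suc n \<Longrightarrow> norm (z j) \<le> norm (z j0)"
  proof -
    have "finite ((\<lambda>j. norm (z j)) ` {..<Suc n})" "(\<lambda>j. norm (z j)) ` {..<Suc n} \<noteq> {}" by auto
    then obtain j0 where "j0 \<in> {..<Suc n}" "norm (z j0) = Max ((\<lambda>j. norm (z j)) ` {..<Suc n})"
      by (metis (no_types, lifting) Max_in imageE)
    thus ?thesis using that by (metis Max_ge finite_imageI finite_lessThan image_eqI lessThan_iff)
  qed
  define M where "M = norm (z j0)"
  have "0 < norm (z j)" using \<open>z j \<noteq> 0\<close> by simp
  hence "M > 0" using j0(2)[of j] \<open>j \<le> n\<close> unfolding M_def by linarith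
  have "(\<Sum>j<Suc n. (if j0 = j then 1 else 0) * z j) = (\<Sum>j<Suc n. if j0 = j then z j else 0)"
    by (intro sum.cong) auto
  also have "\<dots> = z j0" using j0(1) by (simp only: sum.delta' finite_lessThan) simp
  finally have "z j0 = (\<Sum>j<Suc n. (if j0 = j then 1 else 0) * z j) - (\<Sum>j<Suc n. G j0 j * z j)"
    using kernel[of j0] j0(1) by simp
  also have "\<dots> = (\<Sum>j<Suc n. ((if j0 = j then 1 else 0) - G j0 j) * z j)"
    by (simp add: sum_subtractf left_diff_distrib)
  finally have "M \<le> (\<Sum>j<Suc n. norm (((if j0 = j then 1 else 0) - G j0 j) * z j))"
    unfolding M_def by (metis norm_sum)
  also have "\<dots> < (\<Sum>j<Suc n. 1 / Suc n * M)"
  proof (rule sum_strict_mono)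
    fix j assume "j \<in> {..<Suc n}"
    hence "norm (((if j0 = j then 1 else 0) - G j0 j) * z j) \<le> norm (G j0 j - (if j0 = j then 1 else 0)) * M"
      using j0 by (simp add: norm_mult norm_minus_commute M_def mult_left_mono)
    also have "\<dots> < 1 / Suc n * M"
      using near[of j0 j] \<open>j \<in> {..<Suc n}\<close> j0(1) \<open>M > 0\<close> by (intro mult_strict_right_mono) auto
    finally show "norm (((if j0 = j then 1 else 0) - G j0 j) * z j) < 1 / Suc n * M" .
  qed auto
  also have "\<dots> = M" by simp
  finally show False by simp
qed

lemma identity_not_limit_of_rank_deficient:
  fixes G \<gamma> \<beta> :: "nat \<Rightarrow> nat \<Rightarrow> nat \<Rightarrow> 'a::real_normed_field"
  assumes G: "\<And>k i j. i \<le> n \<Longrightarrow> j \<le> n \<Longrightarrow> G k i j = (\<Sum>m<n. \<gamma> k i m * \<beta> k j m)"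
    and lim: "\<And>i j. i \<le> n \<Longrightarrow> j \<le> n \<Longrightarrow> (\<lambda>k. G k i j) \<longlonglongrightarrow> (if i = j then 1 else 0)"
  shows False
proof -
  have "\<forall>\<^sub>F k in sequentially. \<forall>p\<in>{..n}\<times>{..n}.
      norm (G k (fst p) (snd p) - (if fst p = snd p then 1 else 0)) < 1 / Suc n"
  proof (intro eventually_ball_finite ballI)
    fix p :: "nat \<times> nat" assume "p \<in> {..n}\<times>{..n}"
    hence "(\<lambda>k. G k (fst p) (snd p)) \<longlonglongrightarrow> (if fst p = snd p then 1 else 0)"
      using lim[of "fst p" "snd p"] by (simp add: mem_Times_iff)
    from tendstoD[OF this, of "1 / Suc n"]
    show "\<forall>\<^sub>F k in sequentially. norm (G k (fst p) (snd p) - (if fst p = snd p then 1 else 0)) < 1 / Suc n"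
      by (simp add: dist_norm)
  qed simp
  then obtain k where k: "\<And>i j. i \<le> n \<Longrightarrow> j \<le> n \<Longrightarrow> norm (G k i j - (if i = j then 1 else 0)) < 1 / Suc n"
    by (metis (no_types, lifting) eventually_sequentially order_refl mem_Sigma_iff atMost_iff fst_conv snd_conv)
  obtain z where z: "\<exists>j<Suc n. z j \<noteq> 0" "\<forall>l<n. (\<Sum>j<Suc n. \<beta> k j l * z j) = 0"
    using homogeneous_system_nontrivial_solution[of n "Suc n" "\<lambda>l j. \<beta> k j l"] by auto
  have "(\<Sum>j<Suc n. G k i j * z j) = 0" if "i \<le> n" for i
  proof -
    have "(\<Sum>j<Suc n. G k i j * z j) = (\<Sum>j<Suc n. \<Sum>m<n. \<gamma> k i m * \<beta> k j m * z j)"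
      using G that by (intro sum.cong) (auto simp: sum_distrib_right)
    also have "\<dots> = (\<Sum>m<n. \<gamma> k i m * (\<Sum>j<Suc n. \<beta> k j m * z j))"
      by (subst sum.swap) (simp add: sum_distrib_left mult.assoc del: sum.lessThan_Suc)
    finally show ?thesis using z(2) by simp
  qed
  thus False using near_identity_kernel_trivial[OF k] z(1) by (metis less_Suc_eq_le)
qed

section \<open>Vector states on an ideal-quotient isomorphic to the compact operators\<close>

locale compact_quotient = cstar A + hilbert H for A :: "'a cstar_data" and H :: "'h hilbert_data" +
  fixes I J :: "'a set" and \<phi> :: "'a \<Rightarrow> 'h \<Rightarrow> 'h"
  assumes I: "closed_ideal A I" and J: "closed_ideal A J" and J_subset_I: "J \<subseteq> I" and I_neq_J: "I \<noteq> J"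
    and iso: "quotient_iso_compacts A I J H \<phi>"
begin

lemma
  shows phi_compact: "a \<in> I \<Longrightarrow> compact_op H (\<phi> a)"
    and phi_add: "a \<in> I \<Longrightarrow> b \<in> I \<Longrightarrow> x \<in> HX \<Longrightarrow> \<phi> (ad a b) x = hp (\<phi> a x) (\<phi> b x)"
    and phi_scale: "a \<in> I \<Longrightarrow> x \<in> HX \<Longrightarrow> \<phi> (sc c a) x = hsc c (\<phi> a x)"
    and phi_mult: "a \<in> I \<Longrightarrow> b \<in> I \<Longrightarrow> x \<in> HX \<Longrightarrow> \<phi> (mu a b) x = \<phi> a (\<phi> b x)"
    and phi_star: "a \<in> I \<Longrightarrow> x \<in> HX \<Longrightarrow> y \<in> HX \<Longrightarrow> ip (\<phi> a x) y = ip x (\<phi> (st a) y)"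
    and phi_surj: "compact_op H T \<Longrightarrow> \<exists>a\<in>I. \<forall>x\<in>HX. \<phi> a x = T x"
    and phi_kernel: "a \<in> I \<Longrightarrow> a \<in> J \<longleftrightarrow> (\<forall>x\<in>HX. \<phi> a x = hz)"
  using iso unfolding quotient_iso_compacts_def by blast+

lemma phi_closed[simp]: "a \<in> I \<Longrightarrow> x \<in> HX \<Longrightarrow> \<phi> a x \<in> HX"
  and phi_linear_scale: "a \<in> I \<Longrightarrow> x \<in> HX \<Longrightarrow> \<phi> a (hsc c x) = hsc c (\<phi> a x)"
  using phi_compact unfolding compact_op_def by blast+

lemma phi_sub: "a \<in> I \<Longrightarrow> b \<in> I \<Longrightarrow> x \<in> HX \<Longrightarrow> \<phi> (sb a b) x = hp (\<phi> a x) (hsc (-1) (\<phi> b x))"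
  using I by (simp add: cs_sub_def phi_add phi_scale closed_ideal_scale)

lemma phi_zero: "x \<in> HX \<Longrightarrow> \<phi> zr x = hz"
  using phi_kernel[of zr] closed_ideal_zero[OF J] J_subset_I by blast

lemma I_closed: "a \<in> I \<Longrightarrow> a \<in> X"
  using closed_ideal_subset[OF I] by blast

lemma unit_vector_exists: "\<exists>e\<in>HX. ip e e = 1"
proof -
  obtain a where "a \<in> I" "a \<notin> J" using J_subset_I I_neq_J by blast
  then obtain x where x: "x \<in> HX" "\<phi> a x \<noteq> hz" using phi_kernel by blast
  define w where "w = \<phi> a x"
  have w: "w \<in> HX" using \<open>a \<in> I\<close> x by (simp add: w_def)
  hence "hn w \<noteq> 0" using inner_self[OF w] inner_self_eq_norm_square[OF w] x by (auto simp: w_def)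
  define u where "u = hsc (complex_of_real (1 / hn w)) w"
  have "ip u u = complex_of_real (1 / hn w) * complex_of_real (1 / hn w) * complex_of_real ((hn w)\<^sup>2)"
    using w inner_self_eq_norm_square[OF w] by (simp add: u_def inner_scale_left inner_scale_right)
  also have "\<dots> = 1" using \<open>hn w \<noteq> 0\<close> by (simp add: power2_eq_square field_simps)
  finally show ?thesis using w by (auto simp: u_def)
qed

end

locale rank_one_lift = compact_quotient +
  fixes e p
  assumes e: "e \<in> HX" "ip e e = 1" and p: "p \<in> I" "\<And>x. x \<in> HX \<Longrightarrow> \<phi> p x = proj e x"
begin

definition state :: "'a \<Rightarrow> complex" where
  "state z = ip (\<phi> z e) e"

lemma p_closed: "p \<in> X"
  using I_closed p(1) .

lemma star_p_mem: "st p \<in> I"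
  using closed_ideal_star_closed[OF I p(1)] .

lemma state_add: "a \<in> I \<Longrightarrow> b \<in> I \<Longrightarrow> state (ad a b) = state a + state b"
  using e by (simp add: state_def phi_add inner_add_left)

lemma state_scale: "a \<in> I \<Longrightarrow> state (sc c a) = c * state a"
  using e by (simp add: state_def phi_scale inner_scale_left)

lemma state_zero: "state zr = 0"
  using e by (simp add: state_def phi_zero)

lemma state_sub: "a \<in> I \<Longrightarrow> b \<in> I \<Longrightarrow> state (sb a b) = state a - state b"
  using I by (simp add: cs_sub_def state_add state_scale closed_ideal_scale)

lemma state_cs_sum: "(\<And>l. l < N \<Longrightarrow> f l \<in> I) \<Longrightarrow> state (cs_sum A f N) = (\<Sum>l<N. state (f l))"
proof (induct N)
  case (Suc N)
  thus ?case using closed_ideal_cs_sum[OF I, of N f] by (simp add: state_add)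
qed (simp add: state_zero)

lemma state_star_mult_p: "state (mu (st p) p) = 1"
proof -
  have "state (mu (st p) p) = ip (\<phi> (st p) e) e"
    using star_p_mem p e by (simp add: state_def phi_mult proj_def)
  also have "\<dots> = ip e (\<phi> p e)" using phi_star[OF star_p_mem e(1,1)] p_closed by simp
  also have "\<dots> = 1" using p e by (simp add: proj_def inner_scale_right)
  finally show ?thesis .
qed

text \<open>If \<open>\<parallel>q\<parallel> < 1\<close>, then \<open>q - q\<^sup>k\<^sup>+\<^sup>1 \<in> J\<close> and \<open>q\<^sup>k\<^sup>+\<^sup>1 \<rightarrow> 0\<close> would put \<open>q\<close> into \<open>J\<close>.\<close>

lemma norm_ge_one_if_lifts_proj:
  assumes q: "q \<in> I" "\<And>x. x \<in> HX \<Longrightarrow> \<phi> q x = proj e x"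
  shows "1 \<le> nm q"
proof (rule ccontr)
  assume "\<not> 1 \<le> nm q"
  have qX: "q \<in> X" using I_closed q(1) .
  define pw where "pw k = ((\<lambda>w. mu q w) ^^ k) q" for k
  have pw: "pw k \<in> I" for k by (induct k) (auto simp: pw_def q(1) closed_ideal_mult_left[OF I] qX)
  have "\<phi> (pw k) x = proj e x" if "x \<in> HX" for k x
    using that by (induct k arbitrary: x) (simp_all add: pw_def q phi_mult pw[unfolded pw_def] proj_idem e)
  hence "sb q (pw k) \<in> J" for k
    using phi_kernel[of "sb q (pw k)"] q pw closed_ideal_sub[OF I] e
    by (simp add: phi_sub h_add_scale_minus_one)
  moreover have "cs_lim A (\<lambda>k. sb q (pw k)) q"
  proof (rule cs_limI)
    show "(\<lambda>k. nm q ^ Suc k) \<longlonglongrightarrow> 0"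
      using \<open>\<not> 1 \<le> nm q\<close> qX by (intro LIMSEQ_power_zero[THEN LIMSEQ_Suc]) auto
    fix k
    have "nm (pw k) \<le> nm q ^ Suc k"
    proof (induct k)
      case (Suc k)
      have "nm (pw (Suc k)) \<le> nm q * nm (pw k)"
        using norm_mult_le qX I_closed[OF pw[of k]] by (simp add: pw_def)
      also have "\<dots> \<le> nm q * nm q ^ Suc k" using Suc qX by (intro mult_left_mono) auto
      finally show ?case by simp
    qed (simp add: pw_def)
    moreover have "sb (sb q (pw k)) q = sc (-1) (pw k)"
      using qX I_closed[OF pw[of k]] by (simp add: cstar_normalize add_cancel_left)
    ultimately show "nm (sb (sb q (pw k)) q) \<le> nm q ^ Suc k" using I_closed[OF pw[of k]] by (simp add: norm_minus)
  qed (use qX I_closed pw in auto)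
  ultimately have "q \<in> J" using closed_ideal_limit[OF J, of "\<lambda>k. sb q (pw k)" q] qX by blast
  hence "\<phi> q e = hz" using phi_kernel q(1) e by blast
  thus False using q(2)[OF e(1)] e by (simp add: proj_def)
qed

lemma norm_state_le:
  assumes z: "z \<in> I"
  shows "cmod (state z) \<le> nm p * nm p * nm z"
proof (cases "state z = 0")
  case True thus ?thesis using p_closed I_closed[OF z] by simp
next
  case False
  define y where "y = mu p (mu z p)"
  have y: "y \<in> I" using p z I_closed by (simp add: y_def closed_ideal_mult_right[OF I])
  have "\<phi> y x = hsc (state z) (proj e x)" if x: "x \<in> HX" for x
    using x p z e I_closed closed_ideal_mult_right[OF I]
    by (simp add: y_def phi_mult proj_def phi_linear_scale inner_scale_left h_scale_scale state_def mult.commute)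
  hence "\<phi> (sc (1 / state z) y) x = proj e x" if "x \<in> HX" for x
    using that y False e by (simp add: phi_scale h_scale_scale)
  hence "1 \<le> nm (sc (1 / state z) y)"
    using norm_ge_one_if_lifts_proj closed_ideal_scale[OF I y] by blast
  hence "cmod (state z) \<le> nm y" using False I_closed[OF y] by (simp add: norm_scale norm_divide field_simps)
  also have "nm y \<le> nm p * (nm z * nm p)"
    using norm_mult_le[of p "mu z p"] norm_mult_le[of z p] p_closed I_closed[OF z]
    by (simp add: y_def) (meson mult_left_mono norm_nonneg order_trans)
  finally show ?thesis by (simp add: ac_simps)
qed

lemma state_tendsto:
  assumes "\<And>k. f k \<in> I" "d \<in> I" "cs_lim A f d"
  shows "(\<lambda>k. state (f k)) \<longlonglongrightarrow> state d"
proof -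
  have bound: "cmod (state (f k) - state d) \<le> nm p * nm p * nm (sb (f k) d)" for k
    using norm_state_le[of "sb (f k) d"] assms closed_ideal_sub[OF I] by (simp add: state_sub)
  have "(\<lambda>k. cmod (state (f k) - state d)) \<longlonglongrightarrow> 0"
  proof (rule tendsto_sandwich[of "\<lambda>_. 0" _ _ "\<lambda>k. nm p * nm p * nm (sb (f k) d)"])
    show "(\<lambda>k. nm p * nm p * nm (sb (f k) d)) \<longlonglongrightarrow> 0"
      using assms(3) tendsto_mult_right_zero unfolding cs_lim_def by blast
  qed (use bound in auto)
  thus ?thesis by (simp add: tendsto_norm_zero_iff LIM_zero_iff)
qed

lemma sub_p_mult_p_mem: "sb p (mu p p) \<in> J"
proof -
  have "mu p p \<in> I" using p p_closed closed_ideal_mult_right[OF I] by simp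
  moreover have "\<forall>x\<in>HX. \<phi> (sb p (mu p p)) x = hz"
    using p \<open>mu p p \<in> I\<close> e by (simp add: phi_sub phi_mult proj_idem h_add_scale_minus_one)
  ultimately show ?thesis using phi_kernel[of "sb p (mu p p)"] p closed_ideal_sub[OF I] by simp
qed

text \<open>Since \<open>p - p\<^sup>2 \<in> J\<close>, the vector \<open>\<phi> (p r\<^sup>*) e\<close> lies in the range of \<open>proj e\<close>.\<close>

lemma state_mult_through_p:
  assumes r: "r \<in> X" "r' \<in> X"
  shows "state (mu (mu r (st p)) (mu p (st r'))) = state (mu r (st p)) * state (mu p (st r'))"
proof -
  define u where "u = mu r (st p)"
  define v where "v = mu p (st r')"
  have uv: "u \<in> I" "v \<in> I" "mu p v \<in> I"
    using star_p_mem p r p_closed closed_ideal_mult_left[OF I] closed_ideal_mult_right[OF I]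
    by (simp_all add: u_def v_def)
  have "sb v (mu p v) = mu (sb p (mu p p)) (st r')" using p_closed r by (simp add: v_def mult_sub_right mult_assoc)
  hence "sb v (mu p v) \<in> J" using closed_ideal_mult_right[OF J sub_p_mult_p_mem] r by simp
  hence "\<phi> v e = \<phi> (mu p v) e"
    using phi_kernel uv e closed_ideal_sub[OF I] h_eq_if_sub_eq_zero by (simp add: phi_sub)
  also have "\<dots> = hsc (state v) e" using p uv e by (simp add: phi_mult proj_def state_def)
  finally have v_e: "\<phi> v e = hsc (state v) e" .
  have "state (mu u v) = ip (\<phi> u (\<phi> v e)) e" using uv e by (simp add: state_def phi_mult)
  also have "\<dots> = state v * state u"
    using uv e by (simp add: v_e phi_linear_scale inner_scale_left state_def[of u])
  finally show ?thesis by (simp add: u_def v_def)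
qed

lemma state_conj_diag_rep:
  assumes R: "mat_in A (n+1) R" and ij: "i < n+1" "j < n+1"
  shows "state (mat_mult A (n+1) (mat_mult A (n+1) R (diag_rep A n (mu (st p) p))) (mat_adj A R) i j)
    = (\<Sum>m<n. state (mu (R i m) (st p)) * state (mu p (st (R j m))))"
proof -
  have RX: "R i m \<in> X" "R j m \<in> X" if "m < n+1" for m using R ij that by (auto simp: mat_in_def)
  let ?T = "\<lambda>m. if m < n then mu (mu (R i m) (mu (st p) p)) (st (R j m)) else zr"
  have "?T m \<in> I" if "m < n+1" for m
    using RX[OF that] p p_closed closed_ideal_zero[OF I] closed_ideal_mult_left[OF I] closed_ideal_mult_right[OF I]
    by simp
  hence "state (cs_sum A ?T (n+1)) = (\<Sum>m<n+1. state (?T m))"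
    by (rule state_cs_sum)
  also have "\<dots> = (\<Sum>m<n. state (?T m))" by (simp add: state_zero)
  also have "\<dots> = (\<Sum>m<n. state (mu (R i m) (st p)) * state (mu p (st (R j m))))"
    using RX p_closed by (intro sum.cong) (simp_all add: mult_assoc flip: state_mult_through_p)
  finally show ?thesis using mat_entry_conj_diag_rep[OF R _ ij] p_closed by simp
qed

lemma not_n_weakly_purely_infinite: "\<not> n_weakly_purely_infinite A n"
proof
  assume "n_weakly_purely_infinite A n"
  define a where "a = mu (st p) p"
  have a: "a \<in> I" "cs_pos A a"
    using p p_closed closed_ideal_mult_left[OF I] by (auto simp: a_def cs_pos_def)
  hence "cuntz_le A (n+1) (diag_rep A (n+1) a) (diag_rep A n a)"
    using \<open>n_weakly_purely_infinite A n\<close> unfolding n_weakly_purely_infinite_def cuntz_eq_def by blast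
  then obtain R where R: "\<And>k. mat_in A (n+1) (R k)"
    and lim: "mat_lim A (n+1) (\<lambda>k. mat_mult A (n+1) (mat_mult A (n+1) (R k) (diag_rep A n a)) (mat_adj A (R k)))
      (diag_rep A (n+1) a)"
    unfolding cuntz_le_def by blast
  have "(\<lambda>k. \<Sum>m<n. state (mu (R k i m) (st p)) * state (mu p (st (R k j m))))
      \<longlonglongrightarrow> (if i = j then 1 else 0)" if "i \<le> n" "j \<le> n" for i j
  proof -
    let ?E = "\<lambda>k. mat_mult A (n+1) (mat_mult A (n+1) (R k) (diag_rep A n a)) (mat_adj A (R k)) i j"
    have E: "?E k \<in> I" for k
      using mat_entry_conj_diag_rep[OF R] that a I_closed p closed_ideal_zero[OF I] closed_ideal_cs_sum[OF I]
        closed_ideal_mult_left[OF I] closed_ideal_mult_right[OF I] R[of k] by (simp add: mat_in_def)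
    have D: "diag_rep A (n+1) a i j \<in> I" using a closed_ideal_zero[OF I] by (simp add: diag_rep_def)
    have "cs_lim A ?E (diag_rep A (n+1) a i j)" using lim that by (simp add: mat_lim_def)
    hence "(\<lambda>k. state (?E k)) \<longlonglongrightarrow> state (diag_rep A (n+1) a i j)" by (rule state_tendsto[OF E D])
    moreover have "state (diag_rep A (n+1) a i j) = (if i = j then 1 else 0)"
      using that state_star_mult_p state_zero by (simp add: diag_rep_def a_def)
    ultimately show ?thesis using that state_conj_diag_rep[OF R] by (simp add: a_def)
  qed
  thus False by (rule identity_not_limit_of_rank_deficient[OF refl])
qed

end

theorem proposition2p19:
  fixes A :: "'a cstar_data"
  assumes "cstar_algebra A"
    and "weakly_purely_infinite A"
  shows "nowhere_scattered TYPE('h) A"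
  unfolding nowhere_scattered_def
proof (intro allI impI notI)
  fix I J
  assume ideals: "closed_ideal A I \<and> closed_ideal A J \<and> J \<subseteq> I \<and> I \<noteq> J"
    and "\<exists>(H :: 'h hilbert_data) \<phi>. hilbert_space H \<and> quotient_iso_compacts A I J H \<phi>"
  then obtain H :: "'h hilbert_data" and \<phi> where "hilbert_space H" "quotient_iso_compacts A I J H \<phi>"
    by blast
  then interpret compact_quotient A H I J \<phi>
    using assms(1) ideals by unfold_locales auto
  obtain e where e: "e \<in> HX" "ip e e = 1" using unit_vector_exists by blast
  obtain p where p: "p \<in> I" "\<And>x. x \<in> HX \<Longrightarrow> \<phi> p x = proj e x"
    using phi_surj[OF compact_op_proj[OF e]] by blast
  interpret rank_one_lift A H I J \<phi> e p
    using e p by unfold_locales auto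
  show False
    using assms(2) not_n_weakly_purely_infinite unfolding weakly_purely_infinite_def by blast
qed

end
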